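(* Let $T$ be a lifted graph, $F\colon T\to T$ a continuous sun-like map of degree 1, ${\cal P}$ a basic partition of $F$ and ${\cal G}$ its covering graph. (i) Every connected component of ${\cal G}$ contains a vertex of the basis, and the number of connected components of ${\cal G}$ is finite and at most $\#{\cal P}$. (ii) Let ${\cal I}$ be the set of infinite paths $(\alpha_n)_{n\ge0}$ in ${\cal G}$ with $H(\alpha_0)=0$ and $H(\alpha_n)>0$ for all $n\ge1$. If $(\alpha_n)_{n\ge0}\in{\cal I}$ then $H(\alpha_n)=n$ for all $n\ge0$; moreover ${\cal I}$ is finite and $\#{\cal I}\le\#{\cal P}$. (iii) If $(\alpha_n)_{n\ge0}$ is an infinite path in ${\cal G}$, then either there exists a connected component $C$ of ${\cal G}$ such that $\alpha_n\in C$ for all sufficiently large $n$, or there exist $(\beta_n)_{n\ge0}\in{\cal I}$ and $N,M\ge0$ such that $\alpha_{N+n}=\beta_{M+n}$ for all $n\ge0$.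
   Context: A lifted graph is a connected topological space $T$ with a homeomorphism $h\colon\mathbb R\to h(\mathbb R)\subset T$ and a homeomorphism $\tau\colon T\to T$ such that $\tau(h(x))=h(x+1)$, the closure of each connected component of $T\setminus h(\mathbb R)$ is a topological finite graph meeting $h(\mathbb R)$ in exactly one point, and only finitely many such components have closure meeting $h([0,1])$. Identify $h(\mathbb R)$ with $\mathbb R$, write $x+m:=\tau^m(x)$; $r_{\mathbb R}\colon T\to\mathbb R$ is the identity on $\mathbb R$ and maps a component $C'$ of $T\setminus\mathbb R$ to the point $\overline{C'}\cap\mathbb R$. $F$ has degree 1 if $F(x+1)=F(x)+1$. Let $T_{\mathbb R}:=\overline{\bigcup_{n\ge0}F^n(\mathbb R)}$, $X:=\overline{T\setminus T_{\mathbb R}}\cap r_{\mathbb R}^{-1}([0,1))$. $F$ is sun-like if $(T\setminus T_{\mathbb R})\cap r_{\mathbb R}^{-1}([0,1))$ consists of finitely many intervals with pairwise disjoint closures $X^i$, $i\in\Lambda$ (branches), each a compact interval meeting $T_{\mathbb R}$ in one endpoint $\min X^i$ (fixing the order of $X^i$). A basic partition is a finite family ${\cal P}=\{X^i_j\}$ of pairwise disjoint nonempty compact intervals $X^i_1<\dots<X^i_{N_i}$ in $X^i$, with $\ell(X^i_j)\in\Lambda$, $p(X^i_j)\in\mathbb Z$, such that $F(X^i_j)\subset(X^{\ell(X^i_j)}+p(X^i_j))\cup\mathrm{Int}(T_{\mathbb R})$, $F(\min X^i_j)=\min X^{\ell(X^i_j)}+p(X^i_j)$, and $F(X\setminus\bigcup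 X^i_j)\cap(X+\mathbb Z)=\emptyset$. For $A_0,\dots,A_n\in{\cal P}$, $\langle A_0\dots A_n\rangle:=F^n(\{x\in T: F^i(x)\in A_i+\mathbb Z,\ 0\le i\le n\})\cap X$. $A_0\dots A_n\sim B_0\dots B_m$ iff for some $k\le\min(n,m)$, $A_{n-i}=B_{m-i}$ ($0\le i\le k$) and $\langle A_0\dots A_{n-k}\rangle=A_{n-k}=B_{m-k}=\langle B_0\dots B_{m-k}\rangle$. The covering graph ${\cal G}$: vertices are classes $A_0\dots A_n/\!\sim$ with $\langle A_0\dots A_n\rangle\ne\emptyset$; arrow $\alpha\to\beta$ iff $\alpha=A_0\dots A_n/\!\sim$, $\beta=A_0\dots A_nA_{n+1}/\!\sim$ for some $A_i\in{\cal P}$. The significant part of $A_0\dots A_n$ is $A_i\dots A_n$ with $i$ the largest index such that $A_0\dots A_n\sim A_i\dots A_n$ (it depends only on the class); the height $H(\alpha)$ of a vertex $\alpha$ is $n-i$, i.e. the length minus one of its significant part. The basis is the set of vertices of height $0$, i.e. $\{A/\!\sim: A\in{\cal P}\}$, identified with ${\cal P}$. An infinite path is a sequence $(\alpha_n)$ of vertices with $\alpha_n\to\alpha_{n+1}$ for all $n$. A subgraph is strongly connected if any two of its vertices $u,v$ are joined by an oriented path of positive length from $u$ to $v$ within it; connected components are the maximal strongly connected subgraphs. *)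

theory Defs
  imports "HOL-Analysis.Analysis"
begin

text \<open>A (topological) finite graph inside a topological space: a finite union of
finitely many vertices and finitely many arcs (homeomorphic images of [0,1]) whose
endpoints are vertices, whose interiors avoid the vertices, and such that distinct
arcs meet only at vertices.  (Loops and multiple edges are handled by subdivision.)\<close>
definition fin_graph :: "'a::topological_space set \<Rightarrow> bool" where
  "fin_graph G \<longleftrightarrow>
     (\<exists>V E. finite V \<and> finite E \<and> G = V \<union> \<Union>E \<and>
        (\<forall>A\<in>E. \<exists>g g'. homeomorphism {0..1::real} A g g' \<and> g 0 \<in> V \<and> g 1 \<in> V \<and>
                        g ` {0<..<1} \<inter> V = {}) \<and>
        (\<forall>A\<in>E. \<forall>B\<in>E. A \<noteq> B \<longrightarrow> A \<inter> B \<subseteq> V))"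

text \<open>The whole type is the space T; h embeds the real line, tau is the translation.\<close>
definition lifted_graph :: "(real \<Rightarrow> 'a::topological_space) \<Rightarrow> ('a \<Rightarrow> 'a) \<Rightarrow> bool" where
  "lifted_graph h \<tau> \<longleftrightarrow>
     connected (UNIV :: 'a set) \<and>
     (\<exists>h'. homeomorphism (UNIV :: real set) (range h) h h') \<and>
     (\<exists>\<tau>'. homeomorphism (UNIV :: 'a set) UNIV \<tau> \<tau>') \<and>
     (\<forall>x. \<tau> (h x) = h (x + 1)) \<and>
     (\<forall>C \<in> components (- range h). fin_graph (closure C) \<and>
                                     (\<exists>!y. y \<in> closure C \<inter> range h)) \<and>
     finite {C \<in> components (- range h). closure C \<inter> h ` {0..1} \<noteq> {}}"

text \<open>Integer translations  x + m := tau^m (x).\<close>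
definition tr :: "('a \<Rightarrow> 'a) \<Rightarrow> int \<Rightarrow> 'a \<Rightarrow> 'a" where
  "tr \<tau> m = (if m \<ge> 0 then \<tau> ^^ nat m else (inv \<tau>) ^^ nat (- m))"

definition plusZ :: "('a \<Rightarrow> 'a) \<Rightarrow> 'a set \<Rightarrow> 'a set" where
  "plusZ \<tau> A = (\<Union>m::int. tr \<tau> m ` A)"

definition retr :: "(real \<Rightarrow> 'a::topological_space) \<Rightarrow> 'a \<Rightarrow> 'a" where
  "retr h x = (if x \<in> range h then x
               else (THE y. y \<in> closure (connected_component_set (- range h) x) \<inter> range h))"

definition degree_one :: "('a \<Rightarrow> 'a) \<Rightarrow> ('a \<Rightarrow> 'a) \<Rightarrow> bool" where
  "degree_one \<tau> F \<longleftrightarrow> (\<forall>x. F (\<tau> x) = \<tau> (F x))"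

definition TR :: "(real \<Rightarrow> 'a::topological_space) \<Rightarrow> ('a \<Rightarrow> 'a) \<Rightarrow> 'a set" where
  "TR h F = closure (\<Union>n. (F ^^ n) ` range h)"

definition Xset :: "(real \<Rightarrow> 'a::topological_space) \<Rightarrow> ('a \<Rightarrow> 'a) \<Rightarrow> 'a set" where
  "Xset h F = closure (- TR h F) \<inter> {x. retr h x \<in> h ` {0..<1}}"

text \<open>A parametrisation of a branch B: a homeomorphism from [0,1] onto B whose
starting point is the unique point of B in T_R (this fixes the order of B).\<close>
definition branch_param :: "'a::topological_space set \<Rightarrow> 'a set \<Rightarrow> (real \<Rightarrow> 'a) \<Rightarrow> bool" where
  "branch_param TRs B g \<longleftrightarrow> (\<exists>g'. homeomorphism {0..1::real} B g g') \<and> B \<inter> TRs = {g 0}"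

definition branches :: "(real \<Rightarrow> 'a::topological_space) \<Rightarrow> ('a \<Rightarrow> 'a) \<Rightarrow> 'a set set" where
  "branches h F = closure ` components (- TR h F \<inter> {x. retr h x \<in> h ` {0..<1}})"

definition sun_like :: "(real \<Rightarrow> 'a::topological_space) \<Rightarrow> ('a \<Rightarrow> 'a) \<Rightarrow> bool" where
  "sun_like h F \<longleftrightarrow>
     (let S = - TR h F \<inter> {x. retr h x \<in> h ` {0..<1}} in
       finite (components S) \<and>
       (\<forall>C\<in>components S. \<forall>D\<in>components S. C \<noteq> D \<longrightarrow> closure C \<inter> closure D = {}) \<and>
       (\<forall>C\<in>components S. \<exists>g. branch_param (TR h F) (closure C) g))"

definition basic_partition ::
  "(real \<Rightarrow> 'a::topological_space) \<Rightarrow> ('a \<Rightarrow> 'a) \<Rightarrow> ('a \<Rightarrow> 'a) \<Rightarrow> 'a set set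
    \<Rightarrow> ('a set \<Rightarrow> 'a set) \<Rightarrow> ('a set \<Rightarrow> int) \<Rightarrow> bool" where
  "basic_partition h \<tau> F P lb p \<longleftrightarrow>
     finite P \<and>
     (\<forall>A\<in>P. \<forall>B\<in>P. A \<noteq> B \<longrightarrow> A \<inter> B = {}) \<and>
     (\<forall>A\<in>P. lb A \<in> branches h F \<and>
        (\<exists>B\<in>branches h F. \<exists>g a b. branch_param (TR h F) B g \<and> 0 \<le> a \<and> a \<le> b \<and> b \<le> 1 \<and>
             A = g ` {a..b} \<and>
             F (g a) = tr \<tau> (p A) (THE z. z \<in> lb A \<inter> TR h F)) \<and>
        F ` A \<subseteq> tr \<tau> (p A) ` (lb A) \<union> interior (TR h F)) \<and>
     F ` (Xset h F - \<Union>P) \<inter> plusZ \<tau> (Xset h F) = {}"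

definition words :: "'a set set \<Rightarrow> 'a set list set" where
  "words P = {w. w \<noteq> [] \<and> set w \<subseteq> P}"

definition cyl :: "(real \<Rightarrow> 'a::topological_space) \<Rightarrow> ('a \<Rightarrow> 'a) \<Rightarrow> ('a \<Rightarrow> 'a) \<Rightarrow> 'a set list \<Rightarrow> 'a set" where
  "cyl h \<tau> F w =
     (F ^^ (length w - 1)) ` {x. \<forall>i<length w. (F ^^ i) x \<in> plusZ \<tau> (w ! i)} \<inter> Xset h F"

definition weq :: "(real \<Rightarrow> 'a::topological_space) \<Rightarrow> ('a \<Rightarrow> 'a) \<Rightarrow> ('a \<Rightarrow> 'a) \<Rightarrow> 'a set list \<Rightarrow> 'a set list \<Rightarrow> bool" where
  "weq h \<tau> F w v \<longleftrightarrow>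
     (let n = length w - 1; m = length v - 1 in
      \<exists>k \<le> min n m. (\<forall>i\<le>k. w ! (n - i) = v ! (m - i)) \<and>
        cyl h \<tau> F (take (n - k + 1) w) = w ! (n - k) \<and>
        w ! (n - k) = v ! (m - k) \<and>
        v ! (m - k) = cyl h \<tau> F (take (m - k + 1) v))"

definition cls :: "(real \<Rightarrow> 'a::topological_space) \<Rightarrow> ('a \<Rightarrow> 'a) \<Rightarrow> ('a \<Rightarrow> 'a) \<Rightarrow> 'a set set \<Rightarrow> 'a set list \<Rightarrow> 'a set list set" where
  "cls h \<tau> F P w = {v \<in> words P. weq h \<tau> F w v}"

definition cg_vertices :: "(real \<Rightarrow> 'a::topological_space) \<Rightarrow> ('a \<Rightarrow> 'a) \<Rightarrow> ('a \<Rightarrow> 'a) \<Rightarrow> 'a set set \<Rightarrow> 'a set list set set" where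
  "cg_vertices h \<tau> F P = {cls h \<tau> F P w | w. w \<in> words P \<and> cyl h \<tau> F w \<noteq> {}}"

definition cg_arrows :: "(real \<Rightarrow> 'a::topological_space) \<Rightarrow> ('a \<Rightarrow> 'a) \<Rightarrow> ('a \<Rightarrow> 'a) \<Rightarrow> 'a set set \<Rightarrow> ('a set list set \<times> 'a set list set) set" where
  "cg_arrows h \<tau> F P =
     {(\<alpha>, \<beta>). \<alpha> \<in> cg_vertices h \<tau> F P \<and> \<beta> \<in> cg_vertices h \<tau> F P \<and>
        (\<exists>w A. w \<in> words P \<and> A \<in> P \<and> \<alpha> = cls h \<tau> F P w \<and> \<beta> = cls h \<tau> F P (w @ [A]))}"

text \<open>Height: length minus one of the significant part A_i ... A_n, where i is the
largest index with A_0...A_n ~ A_i...A_n (independent of the representative).\<close>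
definition height :: "(real \<Rightarrow> 'a::topological_space) \<Rightarrow> ('a \<Rightarrow> 'a) \<Rightarrow> ('a \<Rightarrow> 'a) \<Rightarrow> 'a set list set \<Rightarrow> nat" where
  "height h \<tau> F \<alpha> =
     (let w = (SOME w. w \<in> \<alpha>) in
        length w - 1 - (GREATEST i. i < length w \<and> weq h \<tau> F w (drop i w)))"

definition inf_path :: "'v set \<Rightarrow> ('v \<times> 'v) set \<Rightarrow> (nat \<Rightarrow> 'v) \<Rightarrow> bool" where
  "inf_path V E a \<longleftrightarrow> (\<forall>n. a n \<in> V \<and> (a n, a (Suc n)) \<in> E)"

definition strongly_connected :: "'v set \<Rightarrow> ('v \<times> 'v) set \<Rightarrow> 'v set \<Rightarrow> bool" where
  "strongly_connected V E S \<longleftrightarrow> S \<noteq> {} \<and> S \<subseteq> V \<and>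
     (\<forall>u\<in>S. \<forall>v\<in>S. (u, v) \<in> (E \<inter> S \<times> S)\<^sup>+)"

definition conn_component :: "'v set \<Rightarrow> ('v \<times> 'v) set \<Rightarrow> 'v set \<Rightarrow> bool" where
  "conn_component V E C \<longleftrightarrow> strongly_connected V E C \<and>
     (\<forall>S. strongly_connected V E S \<and> C \<subseteq> S \<longrightarrow> S = C)"

end

(*
  Everything combinatorial follows from two properties of cylinders.  First, they obey the
  recursion <w A> = (F<w> + Z) \<inter> A, so the class of a word is determined by its significant
  part, and along an arrow the height either drops to 0 or grows by one.  Second, a nonempty
  cylinder extends properly (to a nonempty proper subset of the next interval) by at most one
  interval: <w> is connected and contains min of its last interval A, so F<w> - p(A) is a
  connected set in lb(A) \<union> Int T_R containing the root of the branch lb(A), hence an initial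
  segment of that arc, and an initial segment can cut only one of the disjoint intervals of a
  branch.  Consequently from a vertex at most one arrow leads to positive height.  Cycles must
  then pass through the basis, which injects components and the paths of I into P; an infinite
  path either visits some basis vertex infinitely often, and then eventually stays in its
  component, or has a last (or no) visit to the basis, after which it follows a path of I.
*)

theory Submission
  imports Defs
begin

section \<open>Arcs, intervals and components\<close>

lemma bij_continuous_image_closure:
  assumes "continuous_on UNIV f" "continuous_on UNIV g"
    and "\<And>x. g (f x) = x" "\<And>y. f (g y) = y"
  shows "f ` closure Y = closure (f ` Y)"
proof
  show "f ` closure Y \<subseteq> closure (f ` Y)"
    using assms(1) by (meson closed_closure closure_subset continuous_on_subset image_closure_subset subset_UNIV)
  have "g ` closure (f ` Y) \<subseteq> closure (g ` f ` Y)"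
    using assms(2) by (meson closed_closure closure_subset continuous_on_subset image_closure_subset subset_UNIV)
  also have "g ` f ` Y = Y"
    using assms(3) by (auto simp: image_iff)
  finally show "closure (f ` Y) \<subseteq> f ` closure Y"
    using assms(4) by (metis image_subset_iff rev_image_eqI subsetI)
qed

lemma homeomorphism_image_interval_closed:
  assumes hom: "homeomorphism {0..1::real} L g g'" and "0 \<le> c" "d \<le> 1"
  obtains T where "closed T" "g ` {c..d} = L \<inter> T"
proof -
  have "g ` {c..d} = L \<inter> g' -` {c..d}"
  proof
    show "g ` {c..d} \<subseteq> L \<inter> g' -` {c..d}"
      using hom assms(2,3) unfolding homeomorphism_def by auto
    show "L \<inter> g' -` {c..d} \<subseteq> g ` {c..d}"
      using hom unfolding homeomorphism_def by (metis IntE image_eqI subsetI vimageE)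
  qed
  moreover have "closedin (top_of_set L) (L \<inter> g' -` {c..d})"
    using hom by (intro continuous_closedin_preimage) (auto simp: homeomorphism_def)
  ultimately show ?thesis
    using that by (auto simp: closedin_closed)
qed

lemma arc_far_segment_Int:
  fixes T0 :: "'a::topological_space set"
  assumes hom: "homeomorphism {0..1::real} L g g'" and LT: "L \<inter> T0 = {g 0}"
    and s': "0 < s'" "s' \<le> 1"
  shows "g ` {s'..1} \<inter> (g ` {0..s'} \<union> T0) \<subseteq> {g s'}"
proof
  have g'g: "\<And>u. u \<in> {0..1} \<Longrightarrow> g' (g u) = u" and gL: "g ` {0..1} = L"
    using hom unfolding homeomorphism_def by auto
  fix q assume "q \<in> g ` {s'..1} \<inter> (g ` {0..s'} \<union> T0)"
  then obtain u where u: "u \<in> {s'..1}" "q = g u" "q \<in> g ` {0..s'} \<or> q \<in> T0"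
    by blast
  have u01: "u \<in> {0..1}"
    using u s' by auto
  from u(3) show "q \<in> {g s'}"
  proof
    assume "q \<in> g ` {0..s'}"
    then obtain u' where u': "u' \<in> {0..s'}" "q = g u'"
      by blast
    moreover have "u' \<in> {0..1}"
      using u' s' by auto
    ultimately have "u = u'"
      using g'g u u01 by metis
    then have "u = s'"
      using u u' by simp
    then show ?thesis
      using u by simp
  next
    assume "q \<in> T0"
    moreover have "q \<in> L"
      using gL u01 u(2) by blast
    ultimately have "q = g 0"
      using LT by blast
    then have "u = 0"
      using g'g u01 u by (metis atLeastAtMost_iff order_refl zero_le_one)
    then show ?thesis
      using u s' by simp
  qed
qed

lemma arc_separation:
  fixes T0 :: "'a::topological_space set"
  assumes hom: "homeomorphism {0..1::real} L g g'" and LT: "L \<inter> T0 = {g 0}"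
    and s': "0 < s'" "s' \<le> 1"
  obtains T1 T2 where "closed T1" "closed T2" "L \<subseteq> T1 \<union> T2" "g ` {s'..1} \<subseteq> T1"
    "L \<inter> T1 \<inter> (T2 \<union> T0) \<subseteq> {g s'}"
proof -
  obtain T1 where T1: "closed T1" "g ` {s'..1} = L \<inter> T1"
    using homeomorphism_image_interval_closed[OF hom _ order_refl, of s'] s' by auto
  obtain T2 where T2: "closed T2" "g ` {0..s'} = L \<inter> T2"
    using homeomorphism_image_interval_closed[OF hom order_refl, of s'] s' by auto
  have "{0..s'} \<union> {s'..1} = {0..1::real}"
    using s' by auto
  then have "g ` {0..s'} \<union> g ` {s'..1} = L"
    using homeomorphism_image1[OF hom] by (metis image_Un)
  then have "L \<subseteq> T1 \<union> T2"
    using T1(2) T2(2) by blast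
  moreover have "L \<inter> T1 \<inter> (T2 \<union> T0) \<subseteq> g ` {s'..1} \<inter> (g ` {0..s'} \<union> T0)"
    using T1(2) T2(2) by blast
  then have "L \<inter> T1 \<inter> (T2 \<union> T0) \<subseteq> {g s'}"
    using arc_far_segment_Int[OF hom LT s'] by blast
  moreover have "g ` {s'..1} \<subseteq> T1"
    using T1(2) by blast
  ultimately show ?thesis
    using that T1(1) T2(1) by blast
qed

lemma connected_arc_initial_segment:
  fixes T0 :: "'a::topological_space set"
  assumes "closed T0" and hom: "homeomorphism {0..1::real} L g g'" and LT: "L \<inter> T0 = {g 0}"
    and "connected Q" and QL: "Q \<subseteq> L \<union> interior T0" and "g 0 \<in> Q"
    and s: "0 \<le> s'" "s' \<le> s" "s \<le> 1" and "g s \<in> Q"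
  shows "g s' \<in> Q"
proof (rule ccontr)
  assume ns: "g s' \<notin> Q"
  have "s' \<noteq> 0"
    using ns \<open>g 0 \<in> Q\<close> by auto
  then have "0 < s'" "s' \<le> 1"
    using s by simp_all
  then obtain T1 T2 where T: "closed T1" "closed T2" "L \<subseteq> T1 \<union> T2" "g ` {s'..1} \<subseteq> T1"
    and sep: "L \<inter> T1 \<inter> (T2 \<union> T0) \<subseteq> {g s'}"
    by (rule arc_separation[OF hom LT])
  have iT0: "interior T0 \<subseteq> T0"
    by (rule interior_subset)
  have gs: "g s \<in> L" "g s \<in> T1"
    using homeomorphism_image1[OF hom] T(4) s by auto
  \<comment> \<open>Q would split into its relatively closed parts beyond and before g s'\<close>
  define E1 where "E1 = Q \<inter> (T1 - interior T0)"
  define E2 where "E2 = Q \<inter> (T2 \<union> T0)"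
  have "closedin (top_of_set Q) E1" "closedin (top_of_set Q) E2"
    unfolding E1_def E2_def using T \<open>closed T0\<close> by (auto intro!: closedin_closed_Int)
  moreover have "Q \<subseteq> E1 \<union> E2"
    using QL T(3) iT0 unfolding E1_def E2_def by blast
  moreover have "E1 \<inter> E2 = {}"
    using QL sep ns unfolding E1_def E2_def by blast
  moreover have "g s \<in> E1"
  proof -
    have "g s \<notin> T0"
    proof
      assume "g s \<in> T0"
      then have "g s = g s'"
        using gs sep by blast
      then show False
        using ns \<open>g s \<in> Q\<close> by simp
    qed
    then show ?thesis
      using gs(2) iT0 \<open>g s \<in> Q\<close> unfolding E1_def by blast
  qed
  moreover have "g 0 \<in> E2"
    using \<open>g 0 \<in> Q\<close> LT unfolding E2_def by blast
  ultimately show False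
    using \<open>connected Q\<close> unfolding connected_closedin by blast
qed

lemma intervals_straddling_initial_segment_meet:
  fixes D J1 J2 :: "real set"
  assumes down: "\<And>x y. x \<in> D \<Longrightarrow> 0 \<le> y \<Longrightarrow> y \<le> x \<Longrightarrow> y \<in> D"
    and J: "is_interval J1" "is_interval J2" "J1 \<subseteq> {0..}" "J2 \<subseteq> {0..}"
    and "J1 \<inter> D \<noteq> {}" "J1 - D \<noteq> {}" "J2 \<inter> D \<noteq> {}" "J2 - D \<noteq> {}"
  shows "J1 \<inter> J2 \<noteq> {}"
proof -
  have below: "x < y" if "x \<in> D" "y \<notin> D" "0 \<le> y" for x y
    using down that by force
  obtain x1 y1 x2 y2 where pts: "x1 \<in> J1 \<inter> D" "y1 \<in> J1 - D" "x2 \<in> J2 \<inter> D" "y2 \<in> J2 - D"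
    using assms(6-9) by blast
  then have "x1 < y1" "x1 < y2" "x2 < y1" "x2 < y2"
    using below J(3,4) by blast+
  then have "max x1 x2 \<in> J1" "max x1 x2 \<in> J2"
    using pts J(1,2) unfolding is_interval_1
    by (metis Diff_iff IntD1 max.cobounded1 max.cobounded2 max_def less_imp_le)+
  then show ?thesis by blast
qed

lemma image_Int_preimage_nonempty:
  assumes "A = g ` J" "J \<subseteq> S"
  shows "Q \<inter> A \<noteq> {} \<Longrightarrow> J \<inter> {u \<in> S. g u \<in> Q} \<noteq> {}"
    and "Q \<inter> A \<noteq> A \<Longrightarrow> J - {u \<in> S. g u \<in> Q} \<noteq> {}"
  using assms by auto

lemma continuous_image_connected_component_subset:
  assumes "continuous_on UNIV f" "\<And>y. y \<in> S \<Longrightarrow> f y \<in> S" "x \<in> S"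
  shows "f ` connected_component_set S x \<subseteq> connected_component_set S (f x)"
proof (rule connected_component_maximal)
  show "f x \<in> f ` connected_component_set S x"
    using assms(3) by simp
  show "connected (f ` connected_component_set S x)"
    by (rule connected_continuous_image[OF continuous_on_subset[OF assms(1)] connected_connected_component]) simp
  have "connected_component_set S x \<subseteq> S"
    by (rule connected_component_subset)
  then show "f ` connected_component_set S x \<subseteq> S"
    using assms(2) by blast
qed

lemma branch_param_homeomorphism: "branch_param T B g \<Longrightarrow> \<exists>g'. homeomorphism {0..1} B g g'"
  unfolding branch_param_def by blast

lemma branch_param_root: "branch_param T B g \<Longrightarrow> B \<inter> T = {g 0}"
  unfolding branch_param_def by blast

lemma branch_param_image: "branch_param T B g \<Longrightarrow> g ` {0..1} = B"
  using branch_param_homeomorphism unfolding homeomorphism_def by blast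

lemma branch_param_continuous: "branch_param T B g \<Longrightarrow> continuous_on {0..1} g"
  using branch_param_homeomorphism unfolding homeomorphism_def by blast

section \<open>Strongly connected components\<close>

lemma conn_component_disjoint:
  assumes C1: "conn_component V E C1" and C2: "conn_component V E C2" and "C1 \<inter> C2 \<noteq> {}"
  shows "C1 = C2"
proof -
  obtain z where z: "z \<in> C1" "z \<in> C2"
    using assms(3) by auto
  have sc: "strongly_connected V E C1" "strongly_connected V E C2"
    using C1 C2 unfolding conn_component_def by blast+
  let ?R = "E \<inter> (C1 \<union> C2) \<times> (C1 \<union> C2)"
  have m: "(E \<inter> C1 \<times> C1)\<^sup>+ \<subseteq> ?R\<^sup>+" "(E \<inter> C2 \<times> C2)\<^sup>+ \<subseteq> ?R\<^sup>+"
    by (rule trancl_mono_subset, blast)+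
  have "(u, v) \<in> ?R\<^sup>+" if "u \<in> C1 \<union> C2" "v \<in> C1 \<union> C2" for u v
  proof -
    have "(u, z) \<in> ?R\<^sup>+"
      using that(1) z sc m unfolding strongly_connected_def by blast
    moreover have "(z, v) \<in> ?R\<^sup>+"
      using that(2) z sc m unfolding strongly_connected_def by blast
    ultimately show ?thesis by (rule trancl_trans)
  qed
  moreover have "C1 \<union> C2 \<subseteq> V"
    using sc unfolding strongly_connected_def by blast
  ultimately have "strongly_connected V E (C1 \<union> C2)"
    using z unfolding strongly_connected_def by blast
  then have "C1 \<union> C2 = C1" "C1 \<union> C2 = C2"
    using C1 C2 unfolding conn_component_def by blast+
  then show ?thesis by simp
qed

lemma trancl_within_cycle_class:
  fixes E :: "('v \<times> 'v) set" and x0 :: 'v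
  defines "C \<equiv> {b. (x0, b) \<in> E\<^sup>* \<and> (b, x0) \<in> E\<^sup>*}"
  assumes "(x, y) \<in> E\<^sup>+" "(x0, x) \<in> E\<^sup>*" "(y, x0) \<in> E\<^sup>*"
  shows "(x, y) \<in> (E \<inter> C \<times> C)\<^sup>+"
  using assms(2-4)
proof (induction rule: trancl_induct)
  case (base y)
  have "(x, x0) \<in> E\<^sup>*"
    by (rule converse_rtrancl_into_rtrancl[OF base(1) base(3)])
  moreover have "(x0, y) \<in> E\<^sup>*"
    by (rule rtrancl_into_rtrancl[OF base(2) base(1)])
  ultimately have "(x, y) \<in> E \<inter> C \<times> C"
    using base unfolding C_def by blast
  then show ?case by (rule r_into_trancl)
next
  case (step y z)
  have yx: "(y, x0) \<in> E\<^sup>*"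
    by (rule converse_rtrancl_into_rtrancl[OF step(2) step(5)])
  have x0y: "(x0, y) \<in> E\<^sup>*"
    by (rule rtrancl_trans[OF step(4) trancl_into_rtrancl[OF step(1)]])
  have "(x0, z) \<in> E\<^sup>*"
    by (rule rtrancl_into_rtrancl[OF x0y step(2)])
  then have "(y, z) \<in> E \<inter> C \<times> C"
    using step(2,5) x0y yx unfolding C_def by blast
  moreover have "(x, y) \<in> (E \<inter> C \<times> C)\<^sup>+"
    using step.IH step(4) yx by blast
  ultimately show ?case by (rule trancl_into_trancl[rotated])
qed

lemma conn_component_cycle_class:
  assumes cyc: "(x0, x0) \<in> E\<^sup>+" and EV: "E \<subseteq> V \<times> V"
  defines "C \<equiv> {b. (x0, b) \<in> E\<^sup>* \<and> (b, x0) \<in> E\<^sup>*}"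
  shows "conn_component V E C"
proof -
  have x0C: "x0 \<in> C"
    unfolding C_def by simp
  have "C \<subseteq> V"
  proof
    fix b assume "b \<in> C"
    then have "(x0, b) \<in> E\<^sup>+"
      using cyc unfolding C_def by (blast intro: trancl_rtrancl_trancl)
    then show "b \<in> V"
      using trancl_subset_Sigma[OF EV] by blast
  qed
  moreover have "(u, v) \<in> (E \<inter> C \<times> C)\<^sup>+" if uv: "u \<in> C" "v \<in> C" for u v
  proof -
    have "(x0, v) \<in> E\<^sup>+"
      using cyc uv(2) unfolding C_def by (blast intro: trancl_rtrancl_trancl)
    then have "(u, v) \<in> E\<^sup>+"
      using uv(1) unfolding C_def by (blast intro: rtrancl_trancl_trancl)
    then show ?thesis
      using uv unfolding C_def by (blast intro: trancl_within_cycle_class[unfolded C_def])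
  qed
  ultimately have sc: "strongly_connected V E C"
    using x0C unfolding strongly_connected_def by blast
  have "S \<subseteq> C" if S: "strongly_connected V E S" "C \<subseteq> S" for S
  proof
    fix z assume z: "z \<in> S"
    have x0S: "x0 \<in> S"
      using x0C S(2) by blast
    have m: "(E \<inter> S \<times> S)\<^sup>+ \<subseteq> E\<^sup>+"
      by (rule trancl_mono_subset) blast
    have "(x0, z) \<in> E\<^sup>+" "(z, x0) \<in> E\<^sup>+"
      using S(1) x0S z m unfolding strongly_connected_def by blast+
    then show "z \<in> C"
      unfolding C_def by (blast intro: trancl_into_rtrancl)
  qed
  then show ?thesis
    using sc unfolding conn_component_def by blast
qed

lemma inf_path_trancl:
  assumes "inf_path V E a" "i < j"
  shows "(a i, a j) \<in> E\<^sup>+"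
  using assms(2)
proof (induction j)
  case (Suc j)
  have e: "(a j, a (Suc j)) \<in> E"
    using assms(1) unfolding inf_path_def by auto
  show ?case
  proof (cases "i = j")
    case False
    then show ?thesis using Suc e by (meson less_SucE trancl.trancl_into_trancl)
  qed (use e in auto)
qed simp

section \<open>Covering graphs of abstract cylinder systems\<close>

lemma drop_eq_iff_nth_from_end:
  assumes "k < length w" "k < length v"
  shows "drop (length w - 1 - k) w = drop (length v - 1 - k) v \<longleftrightarrow>
         (\<forall>i\<le>k. w ! (length w - 1 - i) = v ! (length v - 1 - i))"
proof -
  have "drop (length w - 1 - k) w = rev (take (Suc k) (rev w))"
    "drop (length v - 1 - k) v = rev (take (Suc k) (rev v))"
    by (simp_all add: rev_take)
  then have "drop (length w - 1 - k) w = drop (length v - 1 - k) v \<longleftrightarrow>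
      take (Suc k) (rev w) = take (Suc k) (rev v)"
    by simp
  also have "\<dots> \<longleftrightarrow> (\<forall>i<Suc k. rev w ! i = rev v ! i)"
    using assms by (simp add: list_eq_iff_nth_eq)
  also have "\<dots> \<longleftrightarrow> (\<forall>i\<le>k. w ! (length w - 1 - i) = v ! (length v - 1 - i))"
    using assms by (auto simp: rev_nth less_Suc_eq_le)
  finally show ?thesis .
qed

text \<open>An abstract view of the cylinders of a basic partition: cy plays the role of the map
  w \<mapsto> <w>, and ext A C is the cylinder obtained from a cylinder C by appending the letter A;
  for the sun-like map F it is (F(C) + Z) \<inter> A.\<close>
locale cylinder_system =
  fixes P :: "'a set set" and cy :: "'a set list \<Rightarrow> 'a set" and ext :: "'a set \<Rightarrow> 'a set \<Rightarrow> 'a set"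
  assumes finite_P: "finite P"
    and cy_single: "A \<in> P \<Longrightarrow> cy [A] = A"
    and cy_snoc: "w \<noteq> [] \<Longrightarrow> set w \<subseteq> P \<Longrightarrow> A \<in> P \<Longrightarrow> cy (w @ [A]) = ext A (cy w)"
    and ext_subset: "ext A C \<subseteq> A"
    and ext_mono: "C \<subseteq> C' \<Longrightarrow> ext A C \<subseteq> ext A C'"
    and ext_empty: "ext A {} = {}"
begin

lemma cy_append_cong:
  assumes "u \<noteq> []" "set u \<subseteq> P" "u' \<noteq> []" "set u' \<subseteq> P" "set v \<subseteq> P" "cy u = cy u'"
  shows "cy (u @ v) = cy (u' @ v)"
  using assms(5)
proof (induction v rule: rev_induct)
  case (snoc x xs)
  then show ?case
    using assms cy_snoc[of "u @ xs" x] cy_snoc[of "u' @ xs" x] by simp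
qed (use assms in simp)

lemma cy_append_empty:
  assumes "u \<noteq> []" "set u \<subseteq> P" "set v \<subseteq> P" "cy u = {}"
  shows "cy (u @ v) = {}"
  using assms(3)
proof (induction v rule: rev_induct)
  case (snoc x xs)
  then show ?case
    using assms cy_snoc[of "u @ xs" x] ext_empty by simp
qed (use assms in simp)

lemma cy_subset_last:
  assumes "w \<noteq> []" "set w \<subseteq> P"
  shows "cy w \<subseteq> last w"
proof (cases w rule: rev_exhaust)
  case (snoc ys y)
  then show ?thesis
    using assms cy_single cy_snoc[of ys y] ext_subset by (cases "ys = []") auto
qed (use assms in simp)

lemma cy_append_subset:
  assumes "v \<noteq> []" "set (u @ v) \<subseteq> P"
  shows "cy (u @ v) \<subseteq> cy v"
  using assms
proof (induction v rule: rev_induct)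
  case (snoc x xs)
  show ?case
  proof (cases "xs = []")
    case True
    then show ?thesis
      using snoc.prems cy_snoc[of u x] ext_subset cy_single[of x] by (cases "u = []") auto
  next
    case False
    have "cy (u @ xs @ [x]) = ext x (cy (u @ xs))"
      using snoc.prems False cy_snoc[of "u @ xs" x] by simp
    also have "\<dots> \<subseteq> ext x (cy xs)"
      using snoc False by (intro ext_mono) auto
    also have "\<dots> = cy (xs @ [x])"
      using snoc.prems False cy_snoc[of xs x] by simp
    finally show ?thesis by simp
  qed
qed simp

lemma drop_in_words: "w \<in> words P \<Longrightarrow> j < length w \<Longrightarrow> drop j w \<in> words P"
  by (auto simp: words_def dest: in_set_dropD)

lemma snoc_in_words: "w \<in> words P \<Longrightarrow> A \<in> P \<Longrightarrow> w @ [A] \<in> words P"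
  by (auto simp: words_def)

text \<open>At a reset position j the word forgets its past, <A_0 ... A_j> = A_j; the last reset
  position cuts off the significant part of the word.\<close>
definition resets :: "'a set list \<Rightarrow> nat \<Rightarrow> bool" where
  "resets w j \<longleftrightarrow> cy (take (Suc j) w) = w ! j"

definition last_reset :: "'a set list \<Rightarrow> nat" where
  "last_reset w = (GREATEST j. j < length w \<and> resets w j)"

definition significant :: "'a set list \<Rightarrow> 'a set list" where
  "significant w = drop (last_reset w) w"

lemma resets_0: "w \<in> words P \<Longrightarrow> resets w 0"
  unfolding resets_def words_def by (cases w) (auto intro!: cy_single)

lemma last_reset:
  assumes "w \<in> words P"
  shows "last_reset w < length w" "resets w (last_reset w)"
proof -
  have "0 < length w \<and> resets w 0"
    using assms resets_0 by (auto simp: words_def)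
  then have "last_reset w < length w \<and> resets w (last_reset w)"
    unfolding last_reset_def by (rule GreatestI_nat[where b = "length w"]) simp
  then show "last_reset w < length w" "resets w (last_reset w)"
    by blast+
qed

lemma resets_le_last_reset:
  assumes "j < length w" "resets w j"
  shows "j \<le> last_reset w"
  unfolding last_reset_def by (rule Greatest_le_nat[where b = "length w"]) (use assms in auto)

lemma resets_drop_iff:
  assumes w: "w \<in> words P" and j: "j < length w" "resets w j" and t: "j \<le> t" "t < length w"
  shows "resets w t \<longleftrightarrow> resets (drop j w) (t - j)"
proof -
  have "Suc t = Suc j + (t - j)"
    using t by simp
  then have e1: "take (Suc t) w = take (Suc j) w @ take (t - j) (drop (Suc j) w)"
    by (metis take_add)
  have e2: "take (Suc (t - j)) (drop j w) = [w ! j] @ take (t - j) (drop (Suc j) w)"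
    using j by (simp add: Cons_nth_drop_Suc[symmetric])
  have sw: "set w \<subseteq> P" "w \<noteq> []"
    using w by (auto simp: words_def)
  then have wj: "w ! j \<in> P"
    using j by auto
  have "cy (take (Suc j) w) = cy [w ! j]"
    using j(2) cy_single[OF wj] by (simp add: resets_def)
  then have "cy (take (Suc t) w) = cy (take (Suc (t - j)) (drop j w))"
    unfolding e1 e2 using sw wj
    by (intro cy_append_cong) (auto dest: in_set_takeD in_set_dropD)
  moreover have "w ! t = drop j w ! (t - j)"
    using t j by simp
  ultimately show ?thesis
    unfolding resets_def by simp
qed

lemma last_reset_drop:
  assumes w: "w \<in> words P" and j: "j < length w" "resets w j"
  shows "last_reset w = j + last_reset (drop j w)"
proof -
  have dw: "drop j w \<in> words P"
    using drop_in_words w j by blast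
  have jl: "j \<le> last_reset w"
    using resets_le_last_reset[OF j] .
  have "resets (drop j w) (last_reset w - j)"
    using resets_drop_iff[OF w j jl] last_reset[OF w] by simp
  then have "last_reset w - j \<le> last_reset (drop j w)"
    using resets_le_last_reset last_reset[OF w] jl by (simp add: diff_less_mono)
  moreover have "j + last_reset (drop j w) \<le> last_reset w"
  proof -
    have c: "j + last_reset (drop j w) < length w"
      using last_reset[OF dw] j(1) by (simp add: less_diff_conv add.commute)
    then have "resets w (j + last_reset (drop j w))"
      using resets_drop_iff[OF w j, of "j + last_reset (drop j w)"] last_reset[OF dw] by simp
    then show ?thesis
      using resets_le_last_reset c by simp
  qed
  ultimately show ?thesis
    using jl by linarith
qed

lemma significant_drop:
  assumes "w \<in> words P" "j < length w" "resets w j"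
  shows "significant (drop j w) = significant w"
  unfolding significant_def using last_reset_drop[OF assms] by (simp add: add.commute)

lemma significant_in_words: "w \<in> words P \<Longrightarrow> significant w \<in> words P"
  unfolding significant_def using drop_in_words last_reset by blast

lemma significant_idem:
  assumes w: "w \<in> words P"
  shows "significant (significant w) = significant w"
  using significant_drop[OF w] last_reset[OF w] unfolding significant_def by metis

lemma cy_significant:
  assumes w: "w \<in> words P"
  shows "cy (significant w) = cy w"
proof -
  let ?l = "last_reset w"
  have a: "?l < length w" "resets w ?l"
    using last_reset[OF w] by auto
  have sw: "set w \<subseteq> P" "w \<noteq> []"
    using w by (auto simp: words_def)
  then have wl: "w ! ?l \<in> P"
    using a by auto
  have "cy (take (Suc ?l) w @ drop (Suc ?l) w) = cy ([w ! ?l] @ drop (Suc ?l) w)"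
    using sw a wl cy_single[OF wl] unfolding resets_def
    by (intro cy_append_cong) (auto dest: in_set_takeD in_set_dropD)
  moreover have "significant w = [w ! ?l] @ drop (Suc ?l) w"
    unfolding significant_def using a by (simp add: Cons_nth_drop_Suc)
  ultimately show ?thesis
    by simp
qed

lemma significant_snoc:
  assumes w: "w \<in> words P" and A: "A \<in> P"
  shows "significant (w @ [A]) = (if cy (w @ [A]) = A then [A] else significant w @ [A])"
proof -
  have wA: "w @ [A] \<in> words P"
    using w A by (rule snoc_in_words)
  have eq: "resets (w @ [A]) j \<longleftrightarrow> resets w j" if "j < length w" for j
    using that by (simp add: resets_def nth_append)
  have fl: "resets (w @ [A]) (length w) \<longleftrightarrow> cy (w @ [A]) = A"
    by (simp add: resets_def)
  show ?thesis
  proof (cases "cy (w @ [A]) = A")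
    case True
    then have "last_reset (w @ [A]) = length w"
      using resets_le_last_reset[of "length w" "w @ [A]"] fl last_reset[OF wA] by simp
    then show ?thesis
      using True by (simp add: significant_def)
  next
    case False
    have a: "last_reset w < length w" "resets w (last_reset w)"
      using last_reset[OF w] by auto
    have "last_reset (w @ [A]) \<noteq> length w"
      using False fl last_reset[OF wA] by auto
    then have "last_reset (w @ [A]) < length w"
      using last_reset[OF wA] by simp
    then have "last_reset (w @ [A]) = last_reset w"
      using resets_le_last_reset[of "last_reset w" "w @ [A]"] resets_le_last_reset[of _ w]
        a eq last_reset[OF wA] by (simp add: le_antisym)
    then show ?thesis
      using False a by (simp add: significant_def)
  qed
qed

text \<open>Copies of weq, cls, height, cg_vertices and cg_arrows with cy in place of the concrete
  cylinder map.\<close>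
definition word_equiv :: "'a set list \<Rightarrow> 'a set list \<Rightarrow> bool" where
  "word_equiv w v \<longleftrightarrow>
     (let n = length w - 1; m = length v - 1 in
      \<exists>k \<le> min n m. (\<forall>i\<le>k. w ! (n - i) = v ! (m - i)) \<and>
        cy (take (n - k + 1) w) = w ! (n - k) \<and>
        w ! (n - k) = v ! (m - k) \<and>
        v ! (m - k) = cy (take (m - k + 1) v))"

definition word_class :: "'a set list \<Rightarrow> 'a set list set" where
  "word_class w = {v \<in> words P. word_equiv w v}"

definition class_height :: "'a set list set \<Rightarrow> nat" where
  "class_height \<alpha> = (let w = (SOME w. w \<in> \<alpha>) in
        length w - 1 - (GREATEST i. i < length w \<and> word_equiv w (drop i w)))"

definition vertices :: "'a set list set set" where
  "vertices = {word_class w | w. w \<in> words P \<and> cy w \<noteq> {}}"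

definition arrows :: "('a set list set \<times> 'a set list set) set" where
  "arrows = {(\<alpha>, \<beta>). \<alpha> \<in> vertices \<and> \<beta> \<in> vertices \<and>
        (\<exists>w A. w \<in> words P \<and> A \<in> P \<and> \<alpha> = word_class w \<and> \<beta> = word_class (w @ [A]))}"

lemma word_equiv_iff_drop_eq:
  assumes "w \<noteq> []" "v \<noteq> []"
  shows "word_equiv w v \<longleftrightarrow> (\<exists>k. k < length w \<and> k < length v \<and>
           drop (length w - 1 - k) w = drop (length v - 1 - k) v \<and>
           resets w (length w - 1 - k) \<and> resets v (length v - 1 - k))"
proof -
  have "0 < length w" "0 < length v"
    using assms by auto
  then have "k \<le> min (length w - 1) (length v - 1) \<longleftrightarrow> k < length w \<and> k < length v" for k
    by arith
  moreover have "(\<forall>i\<le>k. w ! (length w - 1 - i) = v ! (length v - 1 - i)) \<and>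
        cy (take (length w - 1 - k + 1) w) = w ! (length w - 1 - k) \<and>
        w ! (length w - 1 - k) = v ! (length v - 1 - k) \<and>
        v ! (length v - 1 - k) = cy (take (length v - 1 - k + 1) v) \<longleftrightarrow>
      drop (length w - 1 - k) w = drop (length v - 1 - k) v \<and>
        resets w (length w - 1 - k) \<and> resets v (length v - 1 - k)"
    if "k < length w" "k < length v" for k
    using drop_eq_iff_nth_from_end[OF that] unfolding resets_def by auto
  ultimately show ?thesis
    unfolding word_equiv_def Let_def by metis
qed

lemma word_equiv_iff_significant_eq:
  assumes w: "w \<in> words P" and v: "v \<in> words P"
  shows "word_equiv w v \<longleftrightarrow> significant w = significant v"
proof -
  have ne: "w \<noteq> []" "v \<noteq> []"
    using w v by (auto simp: words_def)
  show ?thesis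
  proof
    assume "word_equiv w v"
    then obtain k where k: "k < length w" "k < length v"
      and d: "drop (length w - 1 - k) w = drop (length v - 1 - k) v"
      and r: "resets w (length w - 1 - k)" "resets v (length v - 1 - k)"
      using word_equiv_iff_drop_eq[OF ne] by blast
    have "significant w = significant (drop (length w - 1 - k) w)"
      using significant_drop[OF w _ r(1)] k by simp
    also have "\<dots> = significant v"
      using significant_drop[OF v _ r(2)] k d by simp
    finally show "significant w = significant v" .
  next
    assume eq: "significant w = significant v"
    define k where "k = length w - 1 - last_reset w"
    have lw: "last_reset w < length w" "resets w (last_reset w)"
      and lv: "last_reset v < length v" "resets v (last_reset v)"
      using last_reset w v by auto
    have "length w - last_reset w = length v - last_reset v"
      using arg_cong[OF eq, of length] by (simp add: significant_def)
    then have "length w - 1 - k = last_reset w" "length v - 1 - k = last_reset v"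
      "k < length w" "k < length v"
      using lw lv unfolding k_def by auto
    then show "word_equiv w v"
      using word_equiv_iff_drop_eq[OF ne] eq lw lv unfolding significant_def by metis
  qed
qed

lemma word_class_eq: "w \<in> words P \<Longrightarrow> word_class w = {v \<in> words P. significant v = significant w}"
  unfolding word_class_def using word_equiv_iff_significant_eq by auto

lemma in_word_class: "w \<in> words P \<Longrightarrow> w \<in> word_class w"
  using word_class_eq by blast

lemma word_class_significant: "w \<in> words P \<Longrightarrow> word_class (significant w) = word_class w"
  using word_class_eq significant_idem significant_in_words by auto

lemma word_class_eqD:
  "w \<in> words P \<Longrightarrow> v \<in> words P \<Longrightarrow> word_class w = word_class v \<Longrightarrow> significant w = significant v"
  using word_class_eq by blast

lemma significant_drop_le:
  assumes v: "v \<in> words P" and i: "i \<le> last_reset v"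
  shows "significant (drop i v) = significant v"
proof -
  let ?l = "last_reset v"
  have b: "?l < length v" "resets v ?l"
    using last_reset[OF v] by auto
  have sv: "set v \<subseteq> P"
    using v by (auto simp: words_def)
  let ?u = "drop i (take (Suc ?l) v)"
  have ne: "?u \<noteq> []"
    using i b by simp
  have "cy (take (Suc ?l) v) = cy (take i (take (Suc ?l) v) @ ?u)"
    by (simp only: append_take_drop_id)
  also have "\<dots> \<subseteq> cy ?u"
    using sv by (intro cy_append_subset[OF ne]) (auto dest: in_set_takeD in_set_dropD)
  finally have "v ! ?l \<subseteq> cy ?u"
    using b(2) unfolding resets_def by simp
  moreover have "cy ?u \<subseteq> last ?u"
    using cy_subset_last[OF ne] sv by (meson in_set_dropD in_set_takeD subset_iff)
  moreover have "last ?u = v ! ?l"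
    using i b ne by (cases "length v = Suc ?l") (auto simp: last_conv_nth min_def)
  ultimately have "cy ?u = v ! ?l"
    by auto
  then have "resets (drop i v) (?l - i)"
    unfolding resets_def using i b by (simp add: take_drop Suc_diff_le)
  then have "significant (drop (?l - i) (drop i v)) = significant (drop i v)"
    using i b by (intro significant_drop drop_in_words[OF v]) auto
  moreover have "drop (?l - i) (drop i v) = significant v"
    using i by (simp add: significant_def)
  ultimately show ?thesis
    using significant_idem[OF v] by simp
qed

lemma class_height_word_class:
  assumes w: "w \<in> words P"
  shows "class_height (word_class w) = length (significant w) - 1"
proof -
  define v where "v = (SOME v. v \<in> word_class w)"
  have "v \<in> word_class w"
    unfolding v_def using in_word_class[OF w] by (rule someI)
  then have v: "v \<in> words P" "significant v = significant w"
    using word_class_eq[OF w] by auto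
  have lv: "last_reset v < length v"
    using last_reset[OF v(1)] by simp
  have "i < length v \<and> word_equiv v (drop i v) \<longleftrightarrow> i \<le> last_reset v" for i
  proof
    assume a: "i < length v \<and> word_equiv v (drop i v)"
    then have "significant (drop i v) = significant v"
      using word_equiv_iff_significant_eq v(1) drop_in_words by metis
    moreover have "length (significant (drop i v)) \<le> length v - i"
      by (simp add: significant_def)
    ultimately show "i \<le> last_reset v"
      using lv by (simp add: significant_def)
  next
    assume "i \<le> last_reset v"
    then show "i < length v \<and> word_equiv v (drop i v)"
      using significant_drop_le[OF v(1)] lv word_equiv_iff_significant_eq v(1) drop_in_words by auto
  qed
  then have "(GREATEST i. i < length v \<and> word_equiv v (drop i v)) = last_reset v"
    by (intro Greatest_equality) auto
  then have "class_height (word_class w) = length v - 1 - last_reset v"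
    unfolding class_height_def v_def Let_def by simp
  also have "\<dots> = length (significant w) - 1"
    using v(2)[symmetric] by (simp add: significant_def)
  finally show ?thesis .
qed

lemma significant_nonempty: "w \<in> words P \<Longrightarrow> significant w \<noteq> []"
  using significant_in_words by (auto simp: words_def)

lemma vertex_cy_nonempty:
  assumes "word_class w \<in> vertices" "w \<in> words P"
  shows "cy w \<noteq> {}"
proof -
  obtain u where u: "u \<in> words P" "cy u \<noteq> {}" "word_class w = word_class u"
    using assms unfolding vertices_def by auto
  then have "significant w = significant u"
    using word_class_eqD assms by blast
  then show ?thesis
    using cy_significant u assms by metis
qed

lemma arrow_height:
  assumes "(\<alpha>, \<beta>) \<in> arrows"
  shows "class_height \<beta> = 0 \<or> class_height \<beta> = Suc (class_height \<alpha>)"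
proof -
  obtain w A where wA: "w \<in> words P" "A \<in> P" "\<alpha> = word_class w" "\<beta> = word_class (w @ [A])"
    using assms unfolding arrows_def by auto
  show ?thesis
    using class_height_word_class[OF wA(1)] class_height_word_class[OF snoc_in_words[OF wA(1,2)]]
      significant_snoc[OF wA(1,2)] significant_nonempty[OF wA(1)] wA
    by (auto split: if_splits)
qed

lemma class_height_0:
  assumes "\<alpha> \<in> vertices" "class_height \<alpha> = 0"
  shows "\<exists>A\<in>P. \<alpha> = word_class [A]"
proof -
  obtain w where w: "w \<in> words P" "\<alpha> = word_class w"
    using assms unfolding vertices_def by auto
  have "length (significant w) - 1 = 0" "length (significant w) \<noteq> 0"
    using class_height_word_class[OF w(1)] significant_nonempty[OF w(1)] assms w by auto
  then have "length (significant w) = 1"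
    by arith
  then obtain A where A: "significant w = [A]"
    by (metis One_nat_def length_0_conv length_Suc_conv)
  then have "A \<in> P"
    using significant_in_words[OF w(1)] by (auto simp: words_def)
  then show ?thesis
    using A word_class_significant[OF w(1)] w by metis
qed

lemma significant_take:
  assumes s: "s \<in> words P" "significant s = s" "cy s \<noteq> {}" and j: "1 \<le> j" "j \<le> length s"
  shows "take j s \<in> words P" "significant (take j s) = take j s" "cy (take j s) \<noteq> {}"
proof -
  have ss: "set s \<subseteq> P"
    using s by (auto simp: words_def)
  show tw: "take j s \<in> words P"
    using ss j by (auto simp: words_def dest: in_set_takeD)
  have "length s - last_reset s = length s" "0 < length s"
    using arg_cong[OF s(2), of length] s(1) by (auto simp: significant_def words_def)
  then have "last_reset s = 0"
    by arith
  have l: "last_reset (take j s) < j" "resets (take j s) (last_reset (take j s))"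
    using last_reset[OF tw] j by auto
  then have "resets s (last_reset (take j s))"
    unfolding resets_def by (simp add: min_def)
  then have "last_reset (take j s) = 0"
    using resets_le_last_reset[of _ s] \<open>last_reset s = 0\<close> l j by fastforce
  then show "significant (take j s) = take j s"
    by (simp add: significant_def)
  show "cy (take j s) \<noteq> {}"
  proof
    assume "cy (take j s) = {}"
    then have "cy (take j s @ drop j s) = {}"
      using cy_append_empty[of "take j s" "drop j s"] tw ss by (auto simp: words_def dest: in_set_dropD)
    then show False
      using s(3) by simp
  qed
qed

lemma arrows_subset: "arrows \<subseteq> vertices \<times> vertices"
  unfolding arrows_def by auto

lemma prefix_arrow:
  assumes s: "s \<in> words P" "significant s = s" "cy s \<noteq> {}" and n: "Suc n < length s"
  shows "(word_class (take (Suc n) s), word_class (take (Suc (Suc n)) s)) \<in> arrows"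
proof -
  have "s ! Suc n \<in> P"
    using s(1) n by (auto simp: words_def)
  moreover have "take (Suc (Suc n)) s = take (Suc n) s @ [s ! Suc n]"
    using n by (simp add: take_Suc_conv_app_nth)
  moreover have "take (Suc n) s \<in> words P" "cy (take (Suc n) s) \<noteq> {}"
    "take (Suc (Suc n)) s \<in> words P" "cy (take (Suc (Suc n)) s) \<noteq> {}"
    using significant_take[OF s] n by auto
  ultimately show ?thesis
    unfolding arrows_def vertices_def by auto
qed

lemma prefix_class_height:
  assumes s: "s \<in> words P" "significant s = s" "cy s \<noteq> {}" and j: "1 \<le> j" "j \<le> length s"
  shows "class_height (word_class (take j s)) = j - 1"
  using significant_take[OF assms] class_height_word_class j by simp

end

locale cylinder_graph = cylinder_system +
  assumes ext_proper_unique: "s \<in> words P \<Longrightarrow> cy s \<noteq> {} \<Longrightarrow> A1 \<in> P \<Longrightarrow> A2 \<in> P \<Longrightarrow>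
     ext A1 (cy s) \<noteq> {} \<Longrightarrow> ext A1 (cy s) \<noteq> A1 \<Longrightarrow> ext A2 (cy s) \<noteq> {} \<Longrightarrow> ext A2 (cy s) \<noteq> A2 \<Longrightarrow>
     A1 = A2"
begin

lemma arrow_positive_height_unique:
  assumes e1: "(\<alpha>, \<beta>1) \<in> arrows" and e2: "(\<alpha>, \<beta>2) \<in> arrows"
    and "class_height \<beta>1 > 0" "class_height \<beta>2 > 0"
  shows "\<beta>1 = \<beta>2"
proof -
  obtain w1 A1 where a1: "w1 \<in> words P" "A1 \<in> P" "\<alpha> = word_class w1" "\<beta>1 = word_class (w1 @ [A1])"
    using e1 unfolding arrows_def by auto
  obtain w2 A2 where a2: "w2 \<in> words P" "A2 \<in> P" "\<alpha> = word_class w2" "\<beta>2 = word_class (w2 @ [A2])"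
    using e2 unfolding arrows_def by auto
  have w1A: "w1 @ [A1] \<in> words P" and w2A: "w2 @ [A2] \<in> words P"
    using a1 a2 snoc_in_words by auto
  have GG: "significant w1 = significant w2"
    using word_class_eqD a1 a2 by metis
  have V: "\<alpha> \<in> vertices" "\<beta>1 \<in> vertices" "\<beta>2 \<in> vertices"
    using e1 e2 unfolding arrows_def by auto
  have c1: "cy (w1 @ [A1]) \<noteq> A1"
    using assms(3) class_height_word_class[OF w1A] significant_snoc[OF a1(1,2)] a1
    by (auto split: if_splits)
  have c2: "cy (w2 @ [A2]) \<noteq> A2"
    using assms(4) class_height_word_class[OF w2A] significant_snoc[OF a2(1,2)] a2
    by (auto split: if_splits)
  have n1: "cy (w1 @ [A1]) \<noteq> {}"
    using vertex_cy_nonempty[OF _ w1A] V(2) a1(4) by simp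
  have n2: "cy (w2 @ [A2]) \<noteq> {}"
    using vertex_cy_nonempty[OF _ w2A] V(3) a2(4) by simp
  let ?s = "significant w1"
  have s: "?s \<in> words P" "cy ?s \<noteq> {}"
    using significant_in_words[OF a1(1)] cy_significant[OF a1(1)]
      vertex_cy_nonempty[OF _ a1(1)] V(1) a1(3) by simp_all
  have "cy (w1 @ [A1]) = ext A1 (cy ?s)" "cy (w2 @ [A2]) = ext A2 (cy ?s)"
    using cy_snoc[of w1 A1] cy_snoc[of w2 A2] a1 a2 cy_significant[OF a1(1)] cy_significant[OF a2(1)] GG
    by (auto simp: words_def)
  then have "A1 = A2"
    using ext_proper_unique[OF s a1(2) a2(2)] c1 c2 n1 n2 by simp
  then show ?thesis
    using a1 a2 significant_snoc[OF a1(1,2)] significant_snoc[OF a2(1,2)] c1 c2 GG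
      word_class_significant w1A w2A by metis
qed

lemma trancl_height_increases:
  assumes "(x, y) \<in> (arrows \<inter> C \<times> C)\<^sup>+"
  shows "(\<exists>z\<in>C. class_height z = 0) \<or> class_height y \<ge> Suc (class_height x)"
  using assms
proof (induction rule: trancl_induct)
  case (base y)
  then show ?case using arrow_height[of x y] by auto
next
  case (step y z)
  then show ?case using arrow_height[of y z] by auto
qed

text \<open>Heights grow along arrows unless they drop to 0, so every cycle passes through the basis.\<close>
lemma conn_component_meets_basis:
  assumes "conn_component vertices arrows C"
  shows "\<exists>\<alpha>\<in>C. class_height \<alpha> = 0"
proof -
  obtain \<alpha> where "\<alpha> \<in> C" "(\<alpha>, \<alpha>) \<in> (arrows \<inter> C \<times> C)\<^sup>+"
    using assms unfolding conn_component_def strongly_connected_def by blast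
  then show ?thesis
    using trancl_height_increases by fastforce
qed

definition basis :: "'a set list set set" where
  "basis = (\<lambda>A. word_class [A]) ` P"

lemma finite_basis: "finite basis" and card_basis_le: "card basis \<le> card P"
  unfolding basis_def using finite_P by (auto intro: card_image_le)

lemma height_0_in_basis: "\<alpha> \<in> vertices \<Longrightarrow> class_height \<alpha> = 0 \<Longrightarrow> \<alpha> \<in> basis"
  using class_height_0 unfolding basis_def by auto

lemma finite_card_le_basis:
  assumes "inj_on f S" "f ` S \<subseteq> basis"
  shows "finite S \<and> card S \<le> card P"
proof -
  have "finite S"
    using assms finite_basis by (metis finite_imageD finite_subset)
  moreover have "card S \<le> card basis"
    using assms finite_basis by (metis card_image card_mono)
  ultimately show ?thesis
    using card_basis_le by simp
qed

lemma conn_components_finite_card: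
  "finite {C. conn_component vertices arrows C} \<and> card {C. conn_component vertices arrows C} \<le> card P"
proof -
  let ?K = "{C. conn_component vertices arrows C}"
  define f where "f C = (SOME \<alpha>. \<alpha> \<in> C \<and> class_height \<alpha> = 0)" for C
  have fC: "f C \<in> C \<and> class_height (f C) = 0" if "C \<in> ?K" for C
    unfolding f_def using conn_component_meets_basis that by (metis (mono_tags, lifting) mem_Collect_eq someI_ex)
  have "inj_on f ?K"
    by (rule inj_onI) (use conn_component_disjoint fC in \<open>metis (no_types, lifting) disjoint_iff mem_Collect_eq\<close>)
  moreover have "C \<subseteq> vertices" if "C \<in> ?K" for C
    using that unfolding conn_component_def strongly_connected_def by blast
  then have "f ` ?K \<subseteq> basis"
    using fC height_0_in_basis by blast
  ultimately show ?thesis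
    by (rule finite_card_le_basis)
qed

definition rays :: "(nat \<Rightarrow> 'a set list set) set" where
  "rays = {a. inf_path vertices arrows a \<and> class_height (a 0) = 0 \<and> (\<forall>n\<ge>1. class_height (a n) > 0)}"

lemma ray_height: "a \<in> rays \<Longrightarrow> class_height (a n) = n"
proof (induction n)
  case (Suc n)
  then have "(a n, a (Suc n)) \<in> arrows" "class_height (a (Suc n)) > 0"
    unfolding rays_def inf_path_def by auto
  then show ?case
    using arrow_height Suc by fastforce
qed (simp add: rays_def)

lemma rays_eqI:
  assumes a: "a \<in> rays" and b: "b \<in> rays" and "a 0 = b 0"
  shows "a = b"
proof
  fix n show "a n = b n"
  proof (induction n)
    case (Suc n)
    have "(a n, a (Suc n)) \<in> arrows" "(b n, b (Suc n)) \<in> arrows"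
      "class_height (a (Suc n)) > 0" "class_height (b (Suc n)) > 0"
      using a b unfolding rays_def inf_path_def by auto
    then show ?case
      using arrow_positive_height_unique Suc by metis
  qed (use assms in simp)
qed

lemma rays_finite_card: "finite rays \<and> card rays \<le> card P"
proof (rule finite_card_le_basis)
  show "inj_on (\<lambda>a. a 0) rays"
    using rays_eqI by (meson inj_onI)
  show "(\<lambda>a. a 0) ` rays \<subseteq> basis"
    using height_0_in_basis unfolding rays_def inf_path_def by auto
qed

text \<open>A path returning infinitely often to the finite basis returns to one vertex of it
  infinitely often and stays in its class.\<close>
lemma inf_path_eventually_in_component:
  assumes a: "inf_path vertices arrows a" and inf: "infinite {n. class_height (a n) = 0}"
  shows "\<exists>C. conn_component vertices arrows C \<and> (\<exists>N. \<forall>n\<ge>N. a n \<in> C)"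
proof -
  let ?Z = "{n. class_height (a n) = 0}"
  have "a ` ?Z \<subseteq> basis"
    using a height_0_in_basis unfolding inf_path_def by auto
  then have "finite (a ` ?Z)"
    using finite_basis finite_subset by blast
  then obtain n0 where n0: "n0 \<in> ?Z" "infinite {n \<in> ?Z. a n = a n0}"
    using pigeonhole_infinite[OF inf] by blast
  have later: "\<exists>j>m. a j = a n0" for m
    using n0(2) unfolding infinite_nat_iff_unbounded by auto
  then obtain j0 where "j0 > n0" "a j0 = a n0"
    by blast
  then have cyc: "(a n0, a n0) \<in> arrows\<^sup>+"
    using inf_path_trancl[OF a] by metis
  define C where "C = {b. (a n0, b) \<in> arrows\<^sup>* \<and> (b, a n0) \<in> arrows\<^sup>*}"
  have "conn_component vertices arrows C"
    unfolding C_def by (rule conn_component_cycle_class[OF cyc arrows_subset])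
  moreover have "a n \<in> C" if "n \<ge> n0" for n
  proof -
    have "(a n0, a n) \<in> arrows\<^sup>*"
      using that inf_path_trancl[OF a, of n0 n] by (cases "n = n0") auto
    moreover obtain j where "j > n" "a j = a n0"
      using later by blast
    then have "(a n, a n0) \<in> arrows\<^sup>*"
      using inf_path_trancl[OF a, of n j] by auto
    ultimately show ?thesis
      unfolding C_def by auto
  qed
  ultimately show ?thesis
    by blast
qed

lemma inf_path_tail_ray:
  assumes a: "inf_path vertices arrows a" and "class_height (a N) = 0"
    and "\<And>n. n > N \<Longrightarrow> class_height (a n) > 0"
  shows "(\<lambda>n. a (N + n)) \<in> rays"
  using assms unfolding rays_def inf_path_def by auto

lemma prefixes_path_ray:
  assumes s: "s \<in> words P" "significant s = s" "cy s \<noteq> {}" "length s = Suc k" "k \<ge> 1"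
    and a: "inf_path vertices arrows a" "a 0 = word_class s" "\<And>n. class_height (a n) > 0"
  defines "b \<equiv> \<lambda>n. if n < k then word_class (take (Suc n) s) else a (n - k)"
  shows "b \<in> rays"
proof -
  have bV: "word_class (take (Suc n) s) \<in> vertices" if "n < k" for n
    using significant_take[OF s(1-3), of "Suc n"] that s(4) unfolding vertices_def by auto
  have "b n \<in> vertices \<and> (b n, b (Suc n)) \<in> arrows" for n
  proof (cases "n < k")
    case True
    then have "b (Suc n) = word_class (take (Suc (Suc n)) s)"
      using a(2) s(4) unfolding b_def by auto
    then show ?thesis
      using True bV prefix_arrow[OF s(1-3), of n] s(4) unfolding b_def by simp
  next
    case False
    then have "b n = a (n - k)" "b (Suc n) = a (Suc (n - k))"
      unfolding b_def by (auto simp: Suc_diff_le)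
    then show ?thesis
      using a(1) unfolding inf_path_def by simp
  qed
  moreover have "class_height (b n) > 0" if "n \<ge> 1" for n
    using that a(3) prefix_class_height[OF s(1-3), of "Suc n"] s(4) unfolding b_def by auto
  moreover have "class_height (b 0) = 0"
    using prefix_class_height[OF s(1-3), of 1] s(4,5) unfolding b_def by simp
  ultimately show ?thesis
    unfolding rays_def inf_path_def by blast
qed

text \<open>A path of positive height is preceded by the prefixes of the significant part of its first
  vertex, which lead up from the basis.\<close>
lemma inf_path_positive_height_ray:
  assumes a: "inf_path vertices arrows a" and pos: "\<And>n. class_height (a n) > 0"
  shows "\<exists>b\<in>rays. \<exists>M. \<forall>n. a n = b (M + n)"
proof -
  obtain w where w: "w \<in> words P" "cy w \<noteq> {}" "a 0 = word_class w"
    using a unfolding inf_path_def vertices_def by blast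
  define s where "s = significant w"
  have s: "s \<in> words P" "significant s = s" "cy s \<noteq> {}" "a 0 = word_class s"
    unfolding s_def using significant_in_words[OF w(1)] significant_idem[OF w(1)]
      cy_significant[OF w(1)] word_class_significant[OF w(1)] w by auto
  define k where "k = length s - 1"
  have "class_height (a 0) = k"
    unfolding k_def s_def using class_height_word_class w by simp
  then have k: "length s = Suc k" "k \<ge> 1"
    using pos[of 0] s(1) unfolding k_def by (auto simp: words_def)
  define b where "b = (\<lambda>n. if n < k then word_class (take (Suc n) s) else a (n - k))"
  have "b \<in> rays"
    unfolding b_def using prefixes_path_ray[OF s(1-3) k a s(4) pos] .
  moreover have "\<forall>n. a n = b (k + n)"
    unfolding b_def by simp
  ultimately show ?thesis
    by blast
qed

lemma inf_path_component_or_ray: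
  assumes a: "inf_path vertices arrows a"
  shows "(\<exists>C. conn_component vertices arrows C \<and> (\<exists>N. \<forall>n\<ge>N. a n \<in> C)) \<or>
         (\<exists>b\<in>rays. \<exists>N M. \<forall>n. a (N + n) = b (M + n))"
proof -
  let ?Z = "{n. class_height (a n) = 0}"
  consider "infinite ?Z" | "finite ?Z" "?Z \<noteq> {}" | "?Z = {}"
    by blast
  then show ?thesis
  proof cases
    case 1
    then show ?thesis
      using inf_path_eventually_in_component[OF a] by blast
  next
    case 2
    let ?N = "Max ?Z"
    have "class_height (a ?N) = 0"
      using Max_in[OF 2] by simp
    moreover have "class_height (a n) > 0" if "n > ?N" for n
      using Max_ge[OF 2(1), of n] that by (cases "class_height (a n) = 0") auto
    ultimately have "(\<lambda>n. a (?N + n)) \<in> rays"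
      by (rule inf_path_tail_ray[OF a])
    then show ?thesis
      by (intro disjI2 bexI[of _ "\<lambda>n. a (?N + n)"] exI[of _ ?N] exI[of _ 0]) simp_all
  next
    case 3
    then have "class_height (a n) > 0" for n
      by auto
    then obtain b M where "b \<in> rays" "\<forall>n. a n = b (M + n)"
      using inf_path_positive_height_ray[OF a] by blast
    then have "b \<in> rays" "\<forall>n. a (0 + n) = b (M + n)"
      by simp_all
    then show ?thesis
      by blast
  qed
qed

end

section \<open>Cylinders of sun-like maps\<close>

locale sun_like_map =
  fixes h :: "real \<Rightarrow> 'a::topological_space" and \<tau> F :: "'a \<Rightarrow> 'a"
    and P :: "'a set set" and lb :: "'a set \<Rightarrow> 'a set" and p :: "'a set \<Rightarrow> int"
  assumes lifted: "lifted_graph h \<tau>" and cont: "continuous_on UNIV F" and sun: "sun_like h F"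
    and deg: "degree_one \<tau> F" and part: "basic_partition h \<tau> F P lb p"
begin

lemma tau_homeomorphism:
  "continuous_on UNIV \<tau>" "continuous_on UNIV (inv \<tau>)" "\<And>x. inv \<tau> (\<tau> x) = x" "\<And>x. \<tau> (inv \<tau> x) = x"
proof -
  obtain t' where "homeomorphism UNIV UNIV \<tau> t'"
    using lifted unfolding lifted_graph_def by blast
  then have t': "\<And>x. t' (\<tau> x) = x" "\<And>y. \<tau> (t' y) = y" "continuous_on UNIV \<tau>" "continuous_on UNIV t'"
    unfolding homeomorphism_def by auto
  moreover have "inv \<tau> = t'"
    by (rule inv_equality) (use t' in auto)
  ultimately show "continuous_on UNIV \<tau>" "continuous_on UNIV (inv \<tau>)"
    "\<And>x. inv \<tau> (\<tau> x) = x" "\<And>x. \<tau> (inv \<tau> x) = x"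
    by auto
qed

lemma h_inject: "h x = h y \<Longrightarrow> x = y"
proof -
  obtain h' where "homeomorphism UNIV (range h) h h'"
    using lifted unfolding lifted_graph_def by blast
  then have "\<And>x. h' (h x) = x"
    unfolding homeomorphism_def by auto
  then show "h x = h y \<Longrightarrow> x = y"
    by metis
qed

lemma tau_h: "\<tau> (h x) = h (x + 1)"
  using lifted unfolding lifted_graph_def by auto

lemma inv_tau_h: "inv \<tau> (h x) = h (x - 1)"
proof -
  have "\<tau> (h (x - 1)) = h x"
    using tau_h[of "x - 1"] by simp
  then show ?thesis
    using tau_homeomorphism(3) by metis
qed

lemma tr_0: "tr \<tau> 0 x = x"
  by (simp add: tr_def)

lemma tr_succ: "tr \<tau> (m + 1) x = \<tau> (tr \<tau> m x)"
proof (cases "m \<ge> 0")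
  case True
  then have "nat (m + 1) = Suc (nat m)"
    by simp
  then show ?thesis
    using True by (simp add: tr_def)
next
  case neg: False
  show ?thesis
  proof (cases "m = -1")
    case True
    then show ?thesis
      by (simp add: tr_def tau_homeomorphism(4))
  next
    case False
    then have m: "m + 1 < 0"
      using neg by simp
    then have "nat (- m) = Suc (nat (- (m + 1)))"
      by simp
    then have "tr \<tau> m x = inv \<tau> (tr \<tau> (m + 1) x)"
      using m neg by (simp add: tr_def)
    then show ?thesis
      by (simp add: tau_homeomorphism(4))
  qed
qed

lemma tr_pred: "tr \<tau> (m - 1) x = inv \<tau> (tr \<tau> m x)"
proof -
  have "tr \<tau> m x = \<tau> (tr \<tau> (m - 1) x)"
    using tr_succ[of "m - 1" x] by simp
  then show ?thesis
    using tau_homeomorphism(3) by metis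
qed

lemma tr_add: "tr \<tau> (m + k) x = tr \<tau> m (tr \<tau> k x)"
proof (induction m rule: int_induct[where k = 0])
  case base
  then show ?case by (simp add: tr_0)
next
  case (step1 i)
  have "tr \<tau> (i + 1 + k) x = tr \<tau> ((i + k) + 1) x"
    by (simp add: algebra_simps)
  also have "\<dots> = \<tau> (tr \<tau> (i + k) x)"
    by (rule tr_succ)
  also have "\<dots> = tr \<tau> (i + 1) (tr \<tau> k x)"
    using step1 tr_succ by simp
  finally show ?case .
next
  case (step2 i)
  have "tr \<tau> (i - 1 + k) x = tr \<tau> ((i + k) - 1) x"
    by (simp add: algebra_simps)
  also have "\<dots> = inv \<tau> (tr \<tau> (i + k) x)"
    by (rule tr_pred)
  also have "\<dots> = tr \<tau> (i - 1) (tr \<tau> k x)"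
    using step2 tr_pred by simp
  finally show ?case .
qed

lemma tr_minus_cancel: "tr \<tau> (- m) (tr \<tau> m x) = x"
  using tr_add[of "- m" m x] by (simp add: tr_0)

lemma tr_cancel_minus: "tr \<tau> m (tr \<tau> (- m) x) = x"
  using tr_add[of m "- m" x] by (simp add: tr_0)

lemma tr_h: "tr \<tau> m (h u) = h (u + of_int m)"
proof (induction m rule: int_induct[where k = 0])
  case base
  then show ?case by (simp add: tr_0)
next
  case (step1 i)
  have "tr \<tau> (i + 1) (h u) = \<tau> (tr \<tau> i (h u))"
    by (rule tr_succ)
  also have "\<dots> = h (u + of_int i + 1)"
    using step1 tau_h by simp
  finally show ?case
    by (simp add: add.assoc)
next
  case (step2 i)
  have "tr \<tau> (i - 1) (h u) = inv \<tau> (tr \<tau> i (h u))"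
    by (rule tr_pred)
  also have "\<dots> = h (u + of_int i - 1)"
    using step2 inv_tau_h by simp
  finally show ?case
    by (simp add: add_diff_eq)
qed

lemma F_inv_tau: "F (inv \<tau> x) = inv \<tau> (F x)"
proof -
  have "\<tau> (F (inv \<tau> x)) = F x"
    using deg tau_homeomorphism(4) unfolding degree_one_def by metis
  then show ?thesis
    using tau_homeomorphism(3) by metis
qed

lemma F_tr: "F (tr \<tau> m x) = tr \<tau> m (F x)"
proof (induction m rule: int_induct[where k = 0])
  case base
  then show ?case by (simp add: tr_0)
next
  case (step1 i)
  then show ?case
    using tr_succ deg unfolding degree_one_def by simp
next
  case (step2 i)
  then show ?case
    using tr_pred F_inv_tau by simp
qed

lemma funpow_F_tr: "(F ^^ n) (tr \<tau> m x) = tr \<tau> m ((F ^^ n) x)"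
  by (induction n) (simp_all add: F_tr)

lemma continuous_tr: "continuous_on UNIV (tr \<tau> m)"
proof (induction m rule: int_induct[where k = 0])
  case base
  have "tr \<tau> 0 = id"
    by (rule ext) (simp add: tr_0)
  then show ?case
    by (simp add: continuous_on_id)
next
  case (step1 i)
  have "tr \<tau> (i + 1) = \<tau> \<circ> tr \<tau> i"
    by (rule ext) (simp add: tr_succ)
  then show ?case
    using continuous_on_compose[OF step1(2) continuous_on_subset[OF tau_homeomorphism(1) subset_UNIV]]
    by simp
next
  case (step2 i)
  have "tr \<tau> (i - 1) = inv \<tau> \<circ> tr \<tau> i"
    by (rule ext) (simp add: tr_pred)
  then show ?case
    using continuous_on_compose[OF step2(2) continuous_on_subset[OF tau_homeomorphism(2) subset_UNIV]]
    by simp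
qed

lemma tr_image_closure: "tr \<tau> m ` closure Y = closure (tr \<tau> m ` Y)"
  by (rule bij_continuous_image_closure[where g = "tr \<tau> (- m)"])
    (simp_all add: tr_minus_cancel tr_cancel_minus continuous_tr)

lemma tr_in_range_h_iff: "tr \<tau> m y \<in> range h \<longleftrightarrow> y \<in> range h"
proof
  assume "tr \<tau> m y \<in> range h"
  then obtain u where "tr \<tau> m y = h u"
    by auto
  then have "y = tr \<tau> (- m) (h u)"
    using tr_minus_cancel by metis
  then show "y \<in> range h"
    using tr_h by simp
qed (use tr_h in auto)

lemma component_closure_meets_line:
  assumes "C \<in> components (- range h)"
  shows "\<exists>!y. y \<in> closure C \<inter> range h"
proof -
  have "\<forall>C \<in> components (- range h). fin_graph (closure C) \<and> (\<exists>!y. y \<in> closure C \<inter> range h)"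
    using lifted unfolding lifted_graph_def by (elim conjE) assumption
  then show ?thesis
    by (rule conjunct2[OF bspec[OF _ assms]])
qed

lemma retr_tr: "retr h (tr \<tau> m x) = tr \<tau> m (retr h x)"
proof (cases "x \<in> range h")
  case True
  then show ?thesis
    using tr_in_range_h_iff unfolding retr_def by simp
next
  case False
  let ?f = "tr \<tau> m" and ?g = "tr \<tau> (- m)"
  have fx: "?f x \<notin> range h"
    using False tr_in_range_h_iff by blast
  let ?K = "connected_component_set (- range h) x"
  let ?K' = "connected_component_set (- range h) (?f x)"
  have s1: "?f ` ?K \<subseteq> ?K'"
    by (rule continuous_image_connected_component_subset[OF continuous_tr])
      (use False tr_in_range_h_iff in blast)+
  have s2: "?g ` ?K' \<subseteq> connected_component_set (- range h) (?g (?f x))"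
    by (rule continuous_image_connected_component_subset[OF continuous_tr])
      (use fx tr_in_range_h_iff in blast)+
  have "?K' \<subseteq> ?f ` ?K"
  proof
    fix y assume "y \<in> ?K'"
    then have "?g y \<in> ?K"
      using s2 tr_minus_cancel by auto
    then show "y \<in> ?f ` ?K"
      using tr_cancel_minus[of m y] by (metis image_eqI)
  qed
  then have KK: "?K' = ?f ` ?K"
    using s1 by blast
  have Kc: "?K \<in> components (- range h)" "?K' \<in> components (- range h)"
    using False fx by (auto simp: components_iff)
  define y0 where "y0 = (THE y. y \<in> closure ?K \<inter> range h)"
  have "y0 \<in> closure ?K \<inter> range h"
    unfolding y0_def by (rule theI'[OF component_closure_meets_line[OF Kc(1)]])
  then have "?f y0 \<in> closure ?K' \<inter> range h"
    using tr_in_range_h_iff unfolding KK tr_image_closure[symmetric] by blast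
  then have "(THE y. y \<in> closure ?K' \<inter> range h) = ?f y0"
    by (rule the1_equality[OF component_closure_meets_line[OF Kc(2)]])
  then show ?thesis
    using False fx unfolding retr_def y0_def by simp
qed

lemma h_in_TR: "h u \<in> TR h F"
proof -
  have "h u \<in> (\<Union>n. (F ^^ n) ` range h)"
    by (auto intro: exI[of _ 0])
  then show ?thesis
    unfolding TR_def using closure_subset by (rule subsetD[rotated])
qed

lemma closed_TR: "closed (TR h F)"
  unfolding TR_def by simp

lemma tr_in_TR: "x \<in> TR h F \<Longrightarrow> tr \<tau> m x \<in> TR h F"
proof -
  let ?W = "\<Union>n. (F ^^ n) ` range h"
  have "tr \<tau> m ` ?W \<subseteq> ?W"
  proof
    fix y assume "y \<in> tr \<tau> m ` ?W"
    then obtain n u where "y = tr \<tau> m ((F ^^ n) (h u))"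
      by auto
    then have "y = (F ^^ n) (h (u + of_int m))"
      using funpow_F_tr[of n m "h u", symmetric] tr_h by simp
    then show "y \<in> ?W"
      by blast
  qed
  then have "closure (tr \<tau> m ` ?W) \<subseteq> closure ?W"
    by (rule closure_mono)
  then have "tr \<tau> m ` TR h F \<subseteq> TR h F"
    unfolding TR_def tr_image_closure .
  then show "x \<in> TR h F \<Longrightarrow> tr \<tau> m x \<in> TR h F"
    by blast
qed

lemma tr_in_TR_iff: "tr \<tau> m x \<in> TR h F \<longleftrightarrow> x \<in> TR h F"
  using tr_in_TR[of x m] tr_in_TR[of "tr \<tau> m x" "- m"] tr_minus_cancel by auto

lemma tr_interior_TR: "x \<in> interior (TR h F) \<Longrightarrow> tr \<tau> m x \<in> interior (TR h F)"
proof (rule ccontr)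
  assume x: "x \<in> interior (TR h F)" and "tr \<tau> m x \<notin> interior (TR h F)"
  then have "tr \<tau> m x \<in> closure (- TR h F)"
    by (simp add: closure_complement)
  then have "tr \<tau> (- m) (tr \<tau> m x) \<in> tr \<tau> (- m) ` closure (- TR h F)"
    by blast
  then have "x \<in> closure (tr \<tau> (- m) ` (- TR h F))"
    using tr_minus_cancel tr_image_closure by metis
  moreover have "tr \<tau> (- m) ` (- TR h F) \<subseteq> - TR h F"
    using tr_in_TR_iff by blast
  ultimately have "x \<in> closure (- TR h F)"
    using closure_mono by blast
  then show False
    using x by (simp add: closure_complement)
qed

lemma X_Int_interior_TR: "Xset h F \<inter> interior (TR h F) = {}"
  unfolding Xset_def using closure_complement by blast

text \<open>The set X lies over the fundamental domain [0,1), so no nonzero translate of a point of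
  X is in X.\<close>
lemma tr_in_X_imp_0: assumes "x \<in> Xset h F" "tr \<tau> m x \<in> Xset h F" shows "m = 0"
proof -
  obtain u where u: "u \<in> {0..<1}" "retr h x = h u"
    using assms(1) unfolding Xset_def by auto
  obtain v where v: "v \<in> {0..<1}" "retr h (tr \<tau> m x) = h v"
    using assms(2) unfolding Xset_def by auto
  have "h v = h (u + of_int m)"
    using u v retr_tr tr_h by metis
  then have "v = u + of_int m"
    by (rule h_inject)
  then have "of_int m = v - u"
    by simp
  then have "real_of_int m < 1" "real_of_int m > -1"
    using u v by auto
  then show "m = 0"
    by linarith
qed

lemma retr_closure_connected:
  assumes D: "connected D" "D \<subseteq> - range h" "d \<in> D" and x: "x \<in> closure D"
  shows "retr h x = retr h d"
proof -
  let ?K = "connected_component_set (- range h) d"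
  have DK: "D \<subseteq> ?K"
    using D by (intro connected_component_maximal)
  have Kc: "?K \<in> components (- range h)"
    using D by (auto simp: components_iff)
  define y0 where "y0 = (THE y. y \<in> closure ?K \<inter> range h)"
  have y0: "y0 \<in> closure ?K \<inter> range h"
    unfolding y0_def by (rule theI'[OF component_closure_meets_line[OF Kc]])
  have "d \<notin> range h"
    using D by blast
  then have "retr h d = y0"
    unfolding retr_def y0_def by simp
  moreover have "retr h x = y0"
  proof (cases "x \<in> range h")
    case True
    then have "x \<in> closure ?K \<inter> range h"
      using x closure_mono[OF DK] by blast
    then have "x = y0"
      using component_closure_meets_line[OF Kc] y0 by blast
    then show ?thesis
      using True unfolding retr_def by simp
  next
    case False
    have "connected (insert x D)"
      by (rule connected_intermediate_closure[OF D(1)]) (use x closure_subset in auto)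
    moreover have "insert x D \<subseteq> - range h"
      using False D(2) by blast
    ultimately have "insert x D \<subseteq> ?K"
      using D(3) by (intro connected_component_maximal) auto
    then have "x \<in> ?K"
      by blast
    then have "connected_component_set (- range h) x = ?K"
      by (rule connected_component_eq)
    then show ?thesis
      using False unfolding retr_def y0_def by simp
  qed
  ultimately show ?thesis
    by simp
qed

lemma branches_subset_X:
  assumes B: "B \<in> branches h F"
  shows "B \<subseteq> Xset h F"
proof -
  let ?S = "- TR h F \<inter> {x. retr h x \<in> h ` {0..<1}}"
  obtain D where D: "D \<in> components ?S" "B = closure D"
    using B unfolding branches_def by auto
  have DS: "D \<subseteq> ?S"
    using D(1) by (rule in_components_subset)
  obtain d where d: "d \<in> D"
    using in_components_nonempty[OF D(1)] by blast
  have "D \<subseteq> - range h"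
    using DS h_in_TR by blast
  then have "retr h x = retr h d" if "x \<in> B" for x
    using retr_closure_connected[OF in_components_connected[OF D(1)] _ d] that D(2) by blast
  moreover have "retr h d \<in> h ` {0..<1}"
    using d DS by blast
  ultimately have "\<forall>x\<in>B. retr h x \<in> h ` {0..<1}"
    by simp
  moreover have "B \<subseteq> closure (- TR h F)"
    using D(2) DS closure_mono by blast
  ultimately show ?thesis
    unfolding Xset_def by blast
qed

lemma finite_partition: "finite P"
  using part unfolding basic_partition_def by (rule conjunct1)

lemma partition_disjoint: "A \<in> P \<Longrightarrow> B \<in> P \<Longrightarrow> A \<noteq> B \<Longrightarrow> A \<inter> B = {}"
  using conjunct1[OF conjunct2[OF part[unfolded basic_partition_def]]] by blast

lemma partition_element:
  assumes "A \<in> P"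
  shows "lb A \<in> branches h F \<and>
        (\<exists>B\<in>branches h F. \<exists>g a b. branch_param (TR h F) B g \<and> 0 \<le> a \<and> a \<le> b \<and> b \<le> 1 \<and>
             A = g ` {a..b} \<and>
             F (g a) = tr \<tau> (p A) (THE z. z \<in> lb A \<inter> TR h F)) \<and>
        F ` A \<subseteq> tr \<tau> (p A) ` (lb A) \<union> interior (TR h F)"
  using bspec[OF conjunct1[OF conjunct2[OF conjunct2[OF part[unfolded basic_partition_def]]]] assms] .

text \<open>A fixed choice, for every interval A of the partition, of a branch B containing it, of a
  parametrisation g of B and of the parameter interval [a, b] of A; the point g a is min A.\<close>
definition is_chart :: "'a set \<Rightarrow> 'a set \<times> (real \<Rightarrow> 'a) \<times> real \<times> real \<Rightarrow> bool" where
  "is_chart A c \<longleftrightarrow> (case c of (B, g, a, b) \<Rightarrow> B \<in> branches h F \<and> branch_param (TR h F) B g \<and>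
      0 \<le> a \<and> a \<le> b \<and> b \<le> 1 \<and> A = g ` {a..b} \<and> F (g a) = tr \<tau> (p A) (THE z. z \<in> lb A \<inter> TR h F))"

definition chart :: "'a set \<Rightarrow> 'a set \<times> (real \<Rightarrow> 'a) \<times> real \<times> real" where
  "chart A = (SOME c. is_chart A c)"

definition branch_of :: "'a set \<Rightarrow> 'a set" where
  "branch_of A = fst (chart A)"

definition param_of :: "'a set \<Rightarrow> real \<Rightarrow> 'a" where
  "param_of A = fst (snd (chart A))"

definition lo_of :: "'a set \<Rightarrow> real" where
  "lo_of A = fst (snd (snd (chart A)))"

definition hi_of :: "'a set \<Rightarrow> real" where
  "hi_of A = snd (snd (snd (chart A)))"

definition start :: "'a set \<Rightarrow> 'a" where
  "start A = param_of A (lo_of A)"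

lemma chart:
  assumes "A \<in> P"
  shows "branch_of A \<in> branches h F" "branch_param (TR h F) (branch_of A) (param_of A)"
    "0 \<le> lo_of A" "lo_of A \<le> hi_of A" "hi_of A \<le> 1" "A = param_of A ` {lo_of A..hi_of A}"
    "F (start A) = tr \<tau> (p A) (THE z. z \<in> lb A \<inter> TR h F)"
proof -
  obtain B g a b where "B \<in> branches h F" "branch_param (TR h F) B g" "0 \<le> a" "a \<le> b" "b \<le> 1"
    "A = g ` {a..b}" "F (g a) = tr \<tau> (p A) (THE z. z \<in> lb A \<inter> TR h F)"
    using partition_element[OF assms] by blast
  then have "is_chart A (B, g, a, b)"
    unfolding is_chart_def by simp
  then have "is_chart A (chart A)"
    unfolding chart_def by (rule someI)
  moreover obtain B' g' a' b' where "chart A = (B', g', a', b')"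
    by (cases "chart A") auto
  ultimately show "branch_of A \<in> branches h F" "branch_param (TR h F) (branch_of A) (param_of A)"
    "0 \<le> lo_of A" "lo_of A \<le> hi_of A" "hi_of A \<le> 1" "A = param_of A ` {lo_of A..hi_of A}"
    "F (start A) = tr \<tau> (p A) (THE z. z \<in> lb A \<inter> TR h F)"
    unfolding branch_of_def param_of_def lo_of_def hi_of_def start_def is_chart_def by simp_all
qed

lemma part_subset_branch: "A \<in> P \<Longrightarrow> A \<subseteq> branch_of A"
proof -
  assume A: "A \<in> P"
  have "{lo_of A..hi_of A} \<subseteq> {0..1}"
    using chart[OF A] by auto
  then have "A \<subseteq> param_of A ` {0..1}"
    using chart(6)[OF A] by blast
  then show ?thesis
    using branch_param_image[OF chart(2)[OF A]] by simp
qed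

lemma part_subset_X: "A \<in> P \<Longrightarrow> A \<subseteq> Xset h F"
  using part_subset_branch branches_subset_X chart(1) by blast

lemma lb_subset_X: "A \<in> P \<Longrightarrow> lb A \<subseteq> Xset h F"
  using partition_element branches_subset_X by blast

lemma part_connected: "A \<in> P \<Longrightarrow> connected A"
proof -
  assume A: "A \<in> P"
  have "continuous_on {lo_of A..hi_of A} (param_of A)"
    by (rule continuous_on_subset[OF branch_param_continuous[OF chart(2)[OF A]]]) (use chart[OF A] in auto)
  then show ?thesis
    using chart(6)[OF A] by (metis connected_Icc connected_continuous_image)
qed

lemma start_in_part: "A \<in> P \<Longrightarrow> start A \<in> A"
  using chart[of A] unfolding start_def by (metis atLeastAtMost_iff image_eqI order_refl)

lemma plusZ_iff: "x \<in> plusZ \<tau> A \<longleftrightarrow> (\<exists>m a. a \<in> A \<and> x = tr \<tau> m a)"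
  unfolding plusZ_def by blast

lemma subset_plusZ: "A \<subseteq> plusZ \<tau> A"
proof
  fix a assume "a \<in> A"
  then show "a \<in> plusZ \<tau> A"
    unfolding plusZ_iff using tr_0[of a, symmetric] by blast
qed

lemma plusZ_Int_X: assumes "A \<subseteq> Xset h F" shows "plusZ \<tau> A \<inter> Xset h F = A"
proof
  show "plusZ \<tau> A \<inter> Xset h F \<subseteq> A"
  proof
    fix x assume x: "x \<in> plusZ \<tau> A \<inter> Xset h F"
    then have "x \<in> plusZ \<tau> A"
      by blast
    then obtain m a where ma: "a \<in> A" "x = tr \<tau> m a"
      unfolding plusZ_iff by blast
    then have "m = 0"
      using tr_in_X_imp_0[of a m] assms x by blast
    then show "x \<in> A"
      using ma tr_0 by simp
  qed
  show "A \<subseteq> plusZ \<tau> A \<inter> Xset h F"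
    using subset_plusZ assms by blast
qed

lemma tr_in_plusZ: "x \<in> plusZ \<tau> A \<Longrightarrow> tr \<tau> m x \<in> plusZ \<tau> A"
  unfolding plusZ_iff using tr_add by metis

lemma image_plusZ: "F ` plusZ \<tau> A = plusZ \<tau> (F ` A)"
proof
  show "F ` plusZ \<tau> A \<subseteq> plusZ \<tau> (F ` A)"
  proof
    fix y assume "y \<in> F ` plusZ \<tau> A"
    then obtain z where "z \<in> plusZ \<tau> A" "y = F z"
      by blast
    then obtain m a where "a \<in> A" "y = F (tr \<tau> m a)"
      unfolding plusZ_iff by blast
    then show "y \<in> plusZ \<tau> (F ` A)"
      unfolding plusZ_iff using F_tr by blast
  qed
  show "plusZ \<tau> (F ` A) \<subseteq> F ` plusZ \<tau> A"
  proof
    fix y assume "y \<in> plusZ \<tau> (F ` A)"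
    then obtain m a where "a \<in> A" "y = tr \<tau> m (F a)"
      unfolding plusZ_iff by blast
    then have "y = F (tr \<tau> m a)" "tr \<tau> m a \<in> plusZ \<tau> A"
      using F_tr unfolding plusZ_iff by auto
    then show "y \<in> F ` plusZ \<tau> A"
      by blast
  qed
qed

lemma plusZ_mono: "A \<subseteq> B \<Longrightarrow> plusZ \<tau> A \<subseteq> plusZ \<tau> B"
  unfolding plusZ_def by blast

lemma plusZ_empty: "plusZ \<tau> {} = {}"
  unfolding plusZ_def by blast

text \<open>Translation-invariant cylinders: cylZ w = <w> + Z.\<close>
definition follows :: "'a set list \<Rightarrow> 'a set" where
  "follows w = {x. \<forall>i<length w. (F ^^ i) x \<in> plusZ \<tau> (w ! i)}"

definition cylZ :: "'a set list \<Rightarrow> 'a set" where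
  "cylZ w = (F ^^ (length w - 1)) ` follows w"

lemma cyl_eq: "cyl h \<tau> F w = cylZ w \<inter> Xset h F"
  unfolding cyl_def cylZ_def follows_def by simp

lemma cylZ_snoc:
  assumes "w \<noteq> []"
  shows "cylZ (w @ [A]) = F ` cylZ w \<inter> plusZ \<tau> A"
proof -
  have l: "length w = Suc (length w - 1)"
    using assms by simp
  have "follows (w @ [A]) = follows w \<inter> {x. (F ^^ length w) x \<in> plusZ \<tau> A}"
    unfolding follows_def by (auto simp: nth_append less_Suc_eq)
  then have "cylZ (w @ [A]) = (F ^^ length w) ` (follows w \<inter> {x. (F ^^ length w) x \<in> plusZ \<tau> A})"
    unfolding cylZ_def by simp
  also have "\<dots> = (F ^^ length w) ` follows w \<inter> plusZ \<tau> A"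
    by blast
  also have "(F ^^ length w) ` follows w = F ` cylZ w"
  proof -
    have "(F ^^ length w) = F \<circ> (F ^^ (length w - 1))"
      by (subst l) simp
    then show ?thesis
      unfolding cylZ_def by (simp add: image_comp)
  qed
  finally show ?thesis .
qed

lemma tr_in_cylZ: "x \<in> cylZ w \<Longrightarrow> tr \<tau> m x \<in> cylZ w"
proof -
  assume "x \<in> cylZ w"
  then obtain y where y: "y \<in> follows w" "x = (F ^^ (length w - 1)) y"
    unfolding cylZ_def by blast
  have "tr \<tau> m y \<in> follows w"
    using y(1) unfolding follows_def by (auto simp: funpow_F_tr intro: tr_in_plusZ)
  moreover have "tr \<tau> m x = (F ^^ (length w - 1)) (tr \<tau> m y)"
    using y(2) funpow_F_tr by simp
  ultimately show ?thesis
    unfolding cylZ_def by blast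
qed

lemma cylZ_subset_last: assumes "w \<noteq> []" shows "cylZ w \<subseteq> plusZ \<tau> (last w)"
proof
  fix x assume "x \<in> cylZ w"
  then obtain y where y: "y \<in> follows w" "x = (F ^^ (length w - 1)) y"
    unfolding cylZ_def by blast
  have "length w - 1 < length w"
    using assms by simp
  then have "(F ^^ (length w - 1)) y \<in> plusZ \<tau> (w ! (length w - 1))"
    using y(1) unfolding follows_def by blast
  then show "x \<in> plusZ \<tau> (last w)"
    using y(2) assms by (simp add: last_conv_nth)
qed

lemma cylZ_eq_plusZ_cyl:
  assumes "w \<noteq> []" "last w \<subseteq> Xset h F"
  shows "cylZ w = plusZ \<tau> (cyl h \<tau> F w)"
proof
  show "cylZ w \<subseteq> plusZ \<tau> (cyl h \<tau> F w)"
  proof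
    fix x assume x: "x \<in> cylZ w"
    then have "x \<in> plusZ \<tau> (last w)"
      using cylZ_subset_last[OF assms(1)] by blast
    then obtain k a where ka: "a \<in> last w" "x = tr \<tau> k a"
      unfolding plusZ_iff by blast
    then have "a \<in> cylZ w"
      using tr_in_cylZ[OF x, of "- k"] tr_minus_cancel by simp
    then show "x \<in> plusZ \<tau> (cyl h \<tau> F w)"
      using ka assms(2) unfolding plusZ_iff cyl_eq by blast
  qed
  show "plusZ \<tau> (cyl h \<tau> F w) \<subseteq> cylZ w"
    unfolding cyl_eq plusZ_def using tr_in_cylZ by blast
qed

lemma cyl_snoc:
  assumes w: "w \<noteq> []" "set w \<subseteq> P" and A: "A \<in> P"
  shows "cyl h \<tau> F (w @ [A]) = plusZ \<tau> (F ` cyl h \<tau> F w) \<inter> A"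
proof -
  have "last w \<subseteq> Xset h F"
    using w part_subset_X by (meson last_in_set subsetD)
  then have "F ` cylZ w = plusZ \<tau> (F ` cyl h \<tau> F w)"
    using cylZ_eq_plusZ_cyl[OF w(1)] image_plusZ by simp
  moreover have "plusZ \<tau> A \<inter> Xset h F = A"
    using plusZ_Int_X part_subset_X A by blast
  moreover have "cyl h \<tau> F (w @ [A]) = F ` cylZ w \<inter> (plusZ \<tau> A \<inter> Xset h F)"
    unfolding cyl_eq cylZ_snoc[OF w(1)] by (simp add: Int_assoc)
  ultimately show ?thesis
    by simp
qed

lemma cyl_single: assumes "A \<in> P" shows "cyl h \<tau> F [A] = A"
proof -
  have "cylZ [A] = plusZ \<tau> A"
    unfolding cylZ_def follows_def by auto
  then show ?thesis
    unfolding cyl_eq using plusZ_Int_X part_subset_X assms by blast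
qed

lemma cyl_subset_last: assumes "w \<noteq> []" "set w \<subseteq> P" shows "cyl h \<tau> F w \<subseteq> last w"
proof -
  have "last w \<in> P"
    using assms by (meson last_in_set subsetD)
  then show ?thesis
    using cylZ_subset_last[OF assms(1)] plusZ_Int_X[OF part_subset_X] unfolding cyl_eq by blast
qed

lemma branches_disjoint:
  assumes "B1 \<in> branches h F" "B2 \<in> branches h F" "B1 \<noteq> B2"
  shows "B1 \<inter> B2 = {}"
proof -
  let ?S = "- TR h F \<inter> {x. retr h x \<in> h ` {0..<1}}"
  obtain D1 D2 where D: "D1 \<in> components ?S" "B1 = closure D1" "D2 \<in> components ?S" "B2 = closure D2"
    using assms(1,2) unfolding branches_def by blast
  then have "D1 \<noteq> D2"
    using assms(3) by blast
  moreover have "\<forall>C\<in>components ?S. \<forall>D\<in>components ?S. C \<noteq> D \<longrightarrow> closure C \<inter> closure D = {}"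
    using sun unfolding sun_like_def Let_def by (elim conjE)
  ultimately show ?thesis
    using D by blast
qed

lemma root_eq:
  assumes "branch_param (TR h F) B g"
  shows "(THE z. z \<in> B \<inter> TR h F) = g 0"
  unfolding branch_param_root[OF assms] by simp

lemma part_param_interval:
  assumes A: "A \<in> P" and g: "branch_param (TR h F) (branch_of A) g"
  obtains J where "is_interval J" "J \<subseteq> {0..1}" "A = g ` J"
proof -
  obtain g' where "homeomorphism {0..1} (branch_of A) g g'"
    using branch_param_homeomorphism[OF g] by blast
  then have g'g: "\<And>y. y \<in> branch_of A \<Longrightarrow> g (g' y) = y"
    and g'B: "g' ` branch_of A = {0..1}" and cont_g': "continuous_on (branch_of A) g'"
    unfolding homeomorphism_def by auto
  have AB: "A \<subseteq> branch_of A"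
    by (rule part_subset_branch[OF A])
  have "connected (g' ` A)"
    by (rule connected_continuous_image[OF continuous_on_subset[OF cont_g' AB] part_connected[OF A]])
  moreover have "g' ` A \<subseteq> {0..1}"
    using g'B AB by blast
  moreover have "A = g ` g' ` A"
  proof
    show "A \<subseteq> g ` g' ` A"
    proof
      fix y assume "y \<in> A"
      then have "y = g (g' y)"
        using g'g AB by auto
      then show "y \<in> g ` g' ` A"
        using \<open>y \<in> A\<close> by blast
    qed
    show "g ` g' ` A \<subseteq> A"
      using g'g AB by auto
  qed
  ultimately show ?thesis
    using that is_interval_connected_1 by blast
qed

text \<open>Translated back by p A, the image of C \<subseteq> A lies in lb A \<union> Int T_R.\<close>
definition translated_image :: "'a set \<Rightarrow> 'a set \<Rightarrow> 'a set" where
  "translated_image A C = tr \<tau> (- p A) ` F ` C"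

context
  fixes An C
  assumes An: "An \<in> P" and C: "C \<subseteq> An" "connected C" "start An \<in> C"
begin

lemma connected_translated_image: "connected (translated_image An C)"
proof -
  have "connected (F ` C)"
    by (rule connected_continuous_image[OF continuous_on_subset[OF cont subset_UNIV] C(2)])
  then show ?thesis
    unfolding translated_image_def
    by (rule connected_continuous_image[OF continuous_on_subset[OF continuous_tr subset_UNIV]])
qed

lemma image_subset_lb_interior: "F ` C \<subseteq> tr \<tau> (p An) ` lb An \<union> interior (TR h F)"
  using partition_element[OF An] C(1) by blast

lemma translated_image_subset: "translated_image An C \<subseteq> lb An \<union> interior (TR h F)"
proof
  fix y assume "y \<in> translated_image An C"
  then obtain c where c: "c \<in> C" "y = tr \<tau> (- p An) (F c)"
    unfolding translated_image_def by blast
  have "F c \<in> tr \<tau> (p An) ` lb An \<union> interior (TR h F)"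
    using image_subset_lb_interior c(1) by blast
  then show "y \<in> lb An \<union> interior (TR h F)"
  proof
    assume "F c \<in> tr \<tau> (p An) ` lb An"
    then show ?thesis
      using c(2) tr_minus_cancel by auto
  next
    assume "F c \<in> interior (TR h F)"
    then show ?thesis
      using c(2) tr_interior_TR by simp
  qed
qed

lemma root_in_translated_image:
  assumes "branch_param (TR h F) (lb An) g"
  shows "g 0 \<in> translated_image An C"
proof -
  have "F (start An) = tr \<tau> (p An) (g 0)"
    using chart(7)[OF An] root_eq[OF assms] by simp
  then have "tr \<tau> (- p An) (F (start An)) = g 0"
    using tr_minus_cancel by simp
  then show ?thesis
    using C(3) unfolding translated_image_def by (metis image_eqI)
qed

text \<open>Only the translate by -p A of F(C) can meet X, since all other translates of lb A miss X.\<close>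
lemma plusZ_image_Int_part:
  assumes A': "A' \<in> P"
  shows "plusZ \<tau> (F ` C) \<inter> A' = translated_image An C \<inter> A'"
proof
  show "translated_image An C \<inter> A' \<subseteq> plusZ \<tau> (F ` C) \<inter> A'"
    unfolding translated_image_def plusZ_def by blast
  show "plusZ \<tau> (F ` C) \<inter> A' \<subseteq> translated_image An C \<inter> A'"
  proof
    fix x assume x: "x \<in> plusZ \<tau> (F ` C) \<inter> A'"
    then have "x \<in> plusZ \<tau> (F ` C)"
      by blast
    then obtain m y where my: "y \<in> F ` C" "x = tr \<tau> m y"
      unfolding plusZ_iff by blast
    have xX: "x \<in> Xset h F"
      using x part_subset_X[OF A'] by blast
    have "y \<in> tr \<tau> (p An) ` lb An \<union> interior (TR h F)"
      using image_subset_lb_interior my(1) by blast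
    then show "x \<in> translated_image An C \<inter> A'"
    proof
      assume "y \<in> interior (TR h F)"
      then have "x \<in> interior (TR h F)"
        using my(2) tr_interior_TR by simp
      then show ?thesis
        using xX X_Int_interior_TR by blast
    next
      assume "y \<in> tr \<tau> (p An) ` lb An"
      then obtain l where l: "l \<in> lb An" "y = tr \<tau> (p An) l"
        by blast
      have "x = tr \<tau> (m + p An) l"
        using my(2) l(2) tr_add by simp
      moreover have "l \<in> Xset h F"
        using lb_subset_X[OF An] l(1) by blast
      ultimately have "m = - p An"
        using tr_in_X_imp_0 xX by fastforce
      then show ?thesis
        using my x unfolding translated_image_def by blast
    qed
  qed
qed

lemma translated_image_Int_other_branch:
  assumes A': "A' \<in> P" "branch_of A' \<noteq> lb An"
  shows "translated_image An C \<inter> A' = {}"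
proof -
  have "branch_of A' \<inter> lb An = {}"
    using branches_disjoint chart(1)[OF A'(1)] partition_element[OF An] A'(2) by blast
  then have "translated_image An C \<inter> A' \<subseteq> interior (TR h F) \<inter> Xset h F"
    using translated_image_subset part_subset_branch[OF A'(1)] part_subset_X[OF A'(1)] by blast
  then show ?thesis
    using X_Int_interior_TR by blast
qed

lemma translated_image_initial_segment:
  assumes g: "branch_param (TR h F) (lb An) g"
    and s: "0 \<le> s'" "s' \<le> s" "s \<le> 1" and "g s \<in> translated_image An C"
  shows "g s' \<in> translated_image An C"
proof -
  obtain g' where hom: "homeomorphism {0..1} (lb An) g g'"
    using branch_param_homeomorphism[OF g] by blast
  show ?thesis
    by (rule connected_arc_initial_segment[OF closed_TR hom branch_param_root[OF g]
          connected_translated_image translated_image_subset root_in_translated_image[OF g] s])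
      fact
qed

lemma translated_image_preimage:
  assumes g: "branch_param (TR h F) (lb An) g" and ab: "0 \<le> a" "b \<le> 1"
  defines "D \<equiv> {u \<in> {a..b}. g u \<in> translated_image An C}"
  shows "is_interval D" and "D \<noteq> {} \<Longrightarrow> a \<in> D"
proof -
  show "is_interval D"
    unfolding is_interval_1
  proof (intro ballI allI impI)
    fix x y z assume xy: "x \<in> D" "y \<in> D" "x \<le> z \<and> z \<le> y"
    then have z: "z \<in> {a..b}"
      unfolding D_def by auto
    have "g z \<in> translated_image An C"
      by (rule translated_image_initial_segment[OF g, where s = y]) (use xy z ab in \<open>auto simp: D_def\<close>)
    then show "z \<in> D"
      using z unfolding D_def by blast
  qed
  assume "D \<noteq> {}"
  then obtain u where u: "u \<in> {a..b}" "g u \<in> translated_image An C"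
    unfolding D_def by blast
  then have "g a \<in> translated_image An C"
    using ab by (intro translated_image_initial_segment[OF g _ _ _ u(2)]) auto
  then show "a \<in> D"
    using u unfolding D_def by auto
qed

lemma translated_image_Int_part:
  assumes A': "A' \<in> P"
  shows "translated_image An C \<inter> A' = {} \<or>
    (connected (translated_image An C \<inter> A') \<and> start A' \<in> translated_image An C \<inter> A')"
proof (cases "branch_of A' = lb An")
  case False
  then show ?thesis
    using translated_image_Int_other_branch[OF A'] by blast
next
  case True
  let ?g = "param_of A'" and ?a = "lo_of A'" and ?b = "hi_of A'" and ?Q = "translated_image An C"
  have g: "branch_param (TR h F) (lb An) ?g"
    using chart(2)[OF A'] True by simp
  have ab: "0 \<le> ?a" "?a \<le> ?b" "?b \<le> 1"
    using chart[OF A'] by auto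
  define D where "D = {u \<in> {?a..?b}. ?g u \<in> ?Q}"
  have "?Q \<inter> ?g ` {?a..?b} = ?g ` D"
    unfolding D_def by blast
  then have QA: "?Q \<inter> A' = ?g ` D"
    using chart(6)[OF A'] by simp
  show ?thesis
  proof (cases "D = {}")
    case False
    have "connected D"
      using translated_image_preimage(1)[OF g ab(1,3)] unfolding D_def
      by (simp add: is_interval_connected_1)
    moreover have "continuous_on D ?g"
      by (rule continuous_on_subset[OF branch_param_continuous[OF chart(2)[OF A']]])
        (use ab in \<open>auto simp: D_def\<close>)
    ultimately have "connected (?g ` D)"
      using connected_continuous_image by blast
    moreover have "?a \<in> D"
      using translated_image_preimage(2)[OF g ab(1,3)] False unfolding D_def by blast
    then have "start A' \<in> ?g ` D"
      unfolding start_def by (rule imageI)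
    ultimately show ?thesis
      using QA by simp
  qed (use QA in simp)
qed

text \<open>On the branch lb A the set Q = F(C) - p A is an initial segment, so two disjoint parts
  of the branch cannot both meet Q and its complement.\<close>
lemma translated_image_proper_unique:
  assumes A1: "A1 \<in> P" "translated_image An C \<inter> A1 \<noteq> {}" "translated_image An C \<inter> A1 \<noteq> A1"
    and A2: "A2 \<in> P" "translated_image An C \<inter> A2 \<noteq> {}" "translated_image An C \<inter> A2 \<noteq> A2"
  shows "A1 = A2"
proof (rule ccontr)
  assume ne: "A1 \<noteq> A2"
  let ?g = "param_of A1"
  have b: "branch_of A1 = lb An" "branch_of A2 = lb An"
    using translated_image_Int_other_branch A1 A2 by blast+
  then have g: "branch_param (TR h F) (lb An) ?g"
    using chart(2)[OF A1(1)] by simp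
  obtain J1 where J1: "is_interval J1" "J1 \<subseteq> {0..1}" "A1 = ?g ` J1"
    using part_param_interval[OF A1(1)] g b by metis
  obtain J2 where J2: "is_interval J2" "J2 \<subseteq> {0..1}" "A2 = ?g ` J2"
    using part_param_interval[OF A2(1)] g b by metis
  define D where "D = {u \<in> {0..1}. ?g u \<in> translated_image An C}"
  have "J1 \<inter> J2 \<noteq> {}"
  proof (rule intervals_straddling_initial_segment_meet)
    show "y \<in> D" if "x \<in> D" "0 \<le> y" "y \<le> x" for x y
      using that translated_image_initial_segment[OF g, of y x] unfolding D_def by auto
    show "J1 \<inter> D \<noteq> {}" "J1 - D \<noteq> {}"
      using image_Int_preimage_nonempty[OF J1(3,2)] A1(2,3) unfolding D_def by simp_all
    show "J2 \<inter> D \<noteq> {}" "J2 - D \<noteq> {}"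
      using image_Int_preimage_nonempty[OF J2(3,2)] A2(2,3) unfolding D_def by simp_all
  qed (use J1 J2 in auto)
  then obtain z where "z \<in> J1" "z \<in> J2"
    by blast
  then have "?g z \<in> A1 \<inter> A2"
    using J1(3) J2(3) by (metis IntI imageI)
  then show False
    using partition_disjoint[OF A1(1) A2(1) ne] by blast
qed

end

lemma cyl_connected_start:
  "w \<in> words P \<Longrightarrow> cyl h \<tau> F w \<noteq> {} \<Longrightarrow>
     connected (cyl h \<tau> F w) \<and> start (last w) \<in> cyl h \<tau> F w"
proof (induction w rule: rev_induct)
  case Nil
  then show ?case by (simp add: words_def)
next
  case (snoc A w)
  have A: "A \<in> P" and sw: "set w \<subseteq> P"
    using snoc.prems by (auto simp: words_def)
  show ?case
  proof (cases "w = []")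
    case True
    then show ?thesis
      using cyl_single[OF A] part_connected[OF A] start_in_part[OF A] by simp
  next
    case False
    have e: "cyl h \<tau> F (w @ [A]) = plusZ \<tau> (F ` cyl h \<tau> F w) \<inter> A"
      by (rule cyl_snoc[OF False sw A])
    then have "cyl h \<tau> F w \<noteq> {}"
      using snoc.prems(2) plusZ_empty by force
    moreover have "w \<in> words P"
      using False sw by (simp add: words_def)
    ultimately have IH: "connected (cyl h \<tau> F w)" "start (last w) \<in> cyl h \<tau> F w"
      using snoc.IH by blast+
    have lP: "last w \<in> P"
      using False sw by (meson last_in_set subsetD)
    have sub: "cyl h \<tau> F w \<subseteq> last w"
      by (rule cyl_subset_last[OF False sw])
    have "cyl h \<tau> F (w @ [A]) = translated_image (last w) (cyl h \<tau> F w) \<inter> A"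
      using e plusZ_image_Int_part[OF lP sub IH A] by simp
    then show ?thesis
      using translated_image_Int_part[OF lP sub IH A] snoc.prems(2) by auto
  qed
qed

lemma cylinder_graph: "cylinder_graph P (cyl h \<tau> F) (\<lambda>A C. plusZ \<tau> (F ` C) \<inter> A)"
proof (unfold_locales)
  show "finite P"
    by (rule finite_partition)
  show "\<And>A. A \<in> P \<Longrightarrow> cyl h \<tau> F [A] = A"
    by (rule cyl_single)
  show "\<And>w A. w \<noteq> [] \<Longrightarrow> set w \<subseteq> P \<Longrightarrow> A \<in> P \<Longrightarrow>
      cyl h \<tau> F (w @ [A]) = plusZ \<tau> (F ` cyl h \<tau> F w) \<inter> A"
    by (rule cyl_snoc)
  show "\<And>A C. plusZ \<tau> (F ` C) \<inter> A \<subseteq> A"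
    by blast
  show "plusZ \<tau> (F ` C) \<inter> A \<subseteq> plusZ \<tau> (F ` C') \<inter> A" if "C \<subseteq> C'" for C C' A
    using plusZ_mono[OF image_mono[OF that]] by blast
  show "\<And>A. plusZ \<tau> (F ` {}) \<inter> A = {}"
    using plusZ_empty by simp
next
  fix s A1 A2
  assume s: "s \<in> words P" "cyl h \<tau> F s \<noteq> {}" and A: "A1 \<in> P" "A2 \<in> P"
    and "plusZ \<tau> (F ` cyl h \<tau> F s) \<inter> A1 \<noteq> {}" "plusZ \<tau> (F ` cyl h \<tau> F s) \<inter> A1 \<noteq> A1"
    and "plusZ \<tau> (F ` cyl h \<tau> F s) \<inter> A2 \<noteq> {}" "plusZ \<tau> (F ` cyl h \<tau> F s) \<inter> A2 \<noteq> A2"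
  moreover have ne: "s \<noteq> []" "set s \<subseteq> P"
    using s by (auto simp: words_def)
  moreover have "last s \<in> P"
    using ne by (meson last_in_set subsetD)
  moreover have "cyl h \<tau> F s \<subseteq> last s"
    by (rule cyl_subset_last[OF ne])
  moreover have "connected (cyl h \<tau> F s)" "start (last s) \<in> cyl h \<tau> F s"
    using cyl_connected_start[OF s] by blast+
  ultimately show "A1 = A2"
    using translated_image_proper_unique[of "last s" "cyl h \<tau> F s" A1 A2]
      plusZ_image_Int_part[of "last s" "cyl h \<tau> F s"] by simp
qed

end

theorem mainTheorem6:
  fixes h :: "real \<Rightarrow> 'a::topological_space"
    and \<tau> F :: "'a \<Rightarrow> 'a"
    and P :: "'a set set"
    and lb :: "'a set \<Rightarrow> 'a set" and p :: "'a set \<Rightarrow> int"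
  assumes LG: "lifted_graph h \<tau>"
    and cont: "continuous_on UNIV F"
    and SL: "sun_like h F"
    and deg: "degree_one \<tau> F"
    and BP: "basic_partition h \<tau> F P lb p"
  defines "V \<equiv> cg_vertices h \<tau> F P"
    and "E \<equiv> cg_arrows h \<tau> F P"
    and "H \<equiv> height h \<tau> F"
    and "I \<equiv> {a. inf_path (cg_vertices h \<tau> F P) (cg_arrows h \<tau> F P) a \<and>
               height h \<tau> F (a 0) = 0 \<and> (\<forall>n\<ge>1. height h \<tau> F (a n) > 0)}"
  shows "(\<forall>C. conn_component V E C \<longrightarrow> (\<exists>\<alpha>\<in>C. H \<alpha> = 0)) \<and>
         finite {C. conn_component V E C} \<and> card {C. conn_component V E C} \<le> card P \<and>
         (\<forall>a\<in>I. \<forall>n. H (a n) = n) \<and> finite I \<and> card I \<le> card P \<and>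
         (\<forall>a. inf_path V E a \<longrightarrow>
            (\<exists>C. conn_component V E C \<and> (\<exists>N. \<forall>n\<ge>N. a n \<in> C)) \<or>
            (\<exists>b\<in>I. \<exists>N M. \<forall>n. a (N + n) = b (M + n)))"
proof -
  interpret S: sun_like_map h \<tau> F P lb p
    using LG cont SL deg BP by (rule sun_like_map.intro)
  interpret G: cylinder_graph P "cyl h \<tau> F" "\<lambda>A C. plusZ \<tau> (F ` C) \<inter> A"
    by (rule S.cylinder_graph)
  have weq: "weq h \<tau> F = G.word_equiv"
    by (intro ext) (simp only: weq_def G.word_equiv_def)
  have cls: "cls h \<tau> F P = G.word_class"
    by (intro ext) (simp only: cls_def G.word_class_def weq)
  have V: "V = G.vertices"
    unfolding V_def cg_vertices_def G.vertices_def cls ..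
  have E: "E = G.arrows"
    unfolding E_def cg_arrows_def G.arrows_def cls V[unfolded V_def] ..
  have H: "H = G.class_height"
    unfolding H_def by (intro ext) (simp only: height_def G.class_height_def weq)
  have I: "I = G.rays"
    unfolding I_def G.rays_def V[unfolded V_def] E[unfolded E_def] H[unfolded H_def] ..
  show ?thesis
    unfolding V E H I
    using G.conn_component_meets_basis G.conn_components_finite_card G.ray_height
      G.rays_finite_card G.inf_path_component_or_ray
    by blast
qed

end
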